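(* Let $\Theta=(0,1/2)$, $\theta_0\in(0,1/2)$, and consider the birth–death chain on $\{0,1,2,\dots\}$ with $p_\theta(i+1|i)=\theta$, $p_\theta(i-1|i)=1-\theta$ for $i\ge1$, and $p_\theta(1|0)=1$, with initial probability mass function $q^{(0)}$ common to all $\theta$ and satisfying $\sum_{i\ge1}i^2q^{(0)}(i)<\infty$. Let $\mathcal{F}$ be the family of Beta distributions rescaled to $(0,1/2)$ (laws of $Y/2$ with $Y\sim\mathrm{Beta}(a',b')$), let the prior $\pi$ be the rescaled Beta on $(0,1/2)$ with parameters $a,b>0$, and let $\rho_n$ be the rescaled Beta on $(0,1/2)$ with parameters $2n\theta_0$ and $n(1-2\theta_0)$. Then there are constants $C>0$ and $n_0$ such that for all $n\ge n_0$ conditions (C1)–(C3) hold with $\epsilon_n=C/\sqrt n$.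
   Context: $P^{(n)}_\theta$ is the law of $(X_0,\dots,X_n)$ with probability mass function $q^{(0)}(x_0)\prod_{i=1}^n p_\theta(x_i|x_{i-1})$; data are generated under $\theta_0$ and $\mathrm{Var}$ is under $P^{(n)}_{\theta_0}$. $r_n(\theta,\theta_0):=\log(p^{(n)}_{\theta_0}(X^n)/p^{(n)}_\theta(X^n))$ (convention $0\log(0/0)=0$); $\mathcal{K}$ is KL divergence. Conditions: (C1) $\int\mathcal{K}(P^{(n)}_{\theta_0},P^{(n)}_\theta)\rho_n(d\theta)\le n\epsilon_n$; (C2) $\int\mathrm{Var}(r_n(\theta,\theta_0))\rho_n(d\theta)\le n\epsilon_n$; (C3) $\mathcal{K}(\rho_n,\pi)\le n\epsilon_n$. *)

theory Defs
  imports "HOL-Probability.Probability"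
begin

definition bd_trans :: "real \<Rightarrow> nat \<Rightarrow> nat \<Rightarrow> real" where
  "bd_trans \<theta> i j =
     (if i = 0 then (if j = 1 then 1 else 0)
      else if j = Suc i then \<theta>
      else if Suc j = i then 1 - \<theta>
      else 0)"

definition chain_paths :: "nat \<Rightarrow> (nat \<Rightarrow> nat) set" where
  "chain_paths n = {..n} \<rightarrow>\<^sub>E (UNIV :: nat set)"

definition path_pmf :: "(nat \<Rightarrow> real) \<Rightarrow> real \<Rightarrow> nat \<Rightarrow> (nat \<Rightarrow> nat) \<Rightarrow> real" where
  "path_pmf q0 \<theta> n x = q0 (x 0) * (\<Prod>i\<in>{1..n}. bd_trans \<theta> (x (i - 1)) (x i))"

definition path_law :: "(nat \<Rightarrow> real) \<Rightarrow> real \<Rightarrow> nat \<Rightarrow> (nat \<Rightarrow> nat) measure" where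
  "path_law q0 \<theta> n = density (count_space (chain_paths n)) (\<lambda>x. ennreal (path_pmf q0 \<theta> n x))"

definition log_lik_ratio :: "(nat \<Rightarrow> real) \<Rightarrow> nat \<Rightarrow> real \<Rightarrow> real \<Rightarrow> (nat \<Rightarrow> nat) \<Rightarrow> real" where
  "log_lik_ratio q0 n \<theta> \<theta>0 x =
     (if path_pmf q0 \<theta>0 n x = 0 \<and> path_pmf q0 \<theta> n x = 0 then 0
      else ln (path_pmf q0 \<theta>0 n x / path_pmf q0 \<theta> n x))"

text \<open>KL P Q = K(P,Q) = integral of log(dP/dQ) dP (natural log), via the library.\<close>
definition KL :: "'a measure \<Rightarrow> 'a measure \<Rightarrow> real" where
  "KL P Q = KL_divergence (exp 1) Q P"

definition var_under :: "'a measure \<Rightarrow> ('a \<Rightarrow> real) \<Rightarrow> real" where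
  "var_under P X = (\<integral>x. (X x - (\<integral>y. X y \<partial>P))\<^sup>2 \<partial>P)"

definition beta_measure :: "real \<Rightarrow> real \<Rightarrow> real measure" where
  "beta_measure a b = density lborel
     (\<lambda>x. ennreal (indicator {0<..<1} x * x powr (a - 1) * (1 - x) powr (b - 1) / Beta a b))"

definition rbeta :: "real \<Rightarrow> real \<Rightarrow> real measure" where
  "rbeta a b = distr (beta_measure a b) lborel (\<lambda>y. y / 2)"

end

(*
  Write y = 2 theta and m = 2 theta0.  The log-likelihood ratio of a path is a sum of one-step
  ratios, one for each step leaving a positive state, and a martingale-type induction over the
  path bounds its mean by n KL(theta0, theta) and its second moment by e n (n KL^2 + W), where KL
  and W are the first two moments of the log-ratio of Bernoulli(theta0) against
  Bernoulli(theta).  Both are at most (y - m)^2 / y.  Under rho_n the variable y follows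
  Beta(mn, (1 - m) n), whose mean is m and whose negative moments give
  E (y - m)^2 / y = O(1/n) and E (y - m)^4 / y^2 = O(1/n^2); hence the integrals in (C1) and
  (C2) are bounded.  For (C3), the log-ratio of the two Beta densities is linear in ln y and
  ln (1 - y); bounding these by their tangents at the mean m gives
  KL(rho_n, pi) <= ln B(a, b) - ln B(mn, (1 - m) n) + (mn - a) ln m + ((1 - m) n - b) ln (1 - m),
  and elementary bounds for the Gamma function make this O(ln n), in particular O(sqrt n).
*)
theory Submission
  imports Defs
begin

section \<open>Moments of Beta distributions\<close>

definition beta_density :: "real \<Rightarrow> real \<Rightarrow> real \<Rightarrow> real" where
  "beta_density a b y = indicator {0<..<1} y * y powr (a - 1) * (1 - y) powr (b - 1) / Beta a b"

lemma Beta_real_pos: "0 < a \<Longrightarrow> 0 < b \<Longrightarrow> 0 < Beta a (b::real)"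
  unfolding Beta_def by simp

lemma beta_measure_eq_density: "beta_measure a b = density lborel (\<lambda>y. ennreal (beta_density a b y))"
  unfolding beta_measure_def beta_density_def ..

lemma beta_density_measurable [measurable]: "beta_density a b \<in> borel_measurable borel"
  unfolding beta_density_def by measurable

lemma beta_density_nonneg: "0 < a \<Longrightarrow> 0 < b \<Longrightarrow> 0 \<le> beta_density a b y"
  unfolding beta_density_def using Beta_real_pos[of a b] by (auto simp: indicator_def)

lemma beta_density_pos: "0 < a \<Longrightarrow> 0 < b \<Longrightarrow> 0 < y \<Longrightarrow> y < 1 \<Longrightarrow> 0 < beta_density a b y"
  unfolding beta_density_def using Beta_real_pos[of a b] by (auto simp: indicator_def)

lemma beta_density_eq_0: "\<not> (0 < y \<and> y < 1) \<Longrightarrow> beta_density a b y = 0"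
  unfolding beta_density_def by (simp add: indicator_def)

lemma ln_beta_density:
  "0 < a \<Longrightarrow> 0 < b \<Longrightarrow> 0 < y \<Longrightarrow> y < 1 \<Longrightarrow>
     ln (beta_density a b y) = (a - 1) * ln y + (b - 1) * ln (1 - y) - ln (Beta a b)"
  unfolding beta_density_def using Beta_real_pos[of a b] by (simp add: indicator_def ln_mult ln_div)

lemma has_bochner_integral_beta_density_cong:
  assumes "has_bochner_integral lborel (\<lambda>y. beta_density a b y * f y) I"
    and "\<And>y. 0 < y \<Longrightarrow> y < 1 \<Longrightarrow> f y = g y"
  shows "has_bochner_integral lborel (\<lambda>y. beta_density a b y * g y) I"
  using assms(1)
proof (rule has_bochner_integral_cong[THEN iffD1, rotated -1])
  fix y :: real
  show "beta_density a b y * f y = beta_density a b y * g y"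
    using assms(2)[of y] beta_density_eq_0[of y a b] by (cases "0 < y \<and> y < 1") auto
qed auto

lemma has_bochner_integral_beta_density_powr:
  fixes a b e :: real
  assumes "0 < a" "0 < b" "0 < a + e"
  shows "has_bochner_integral lborel (\<lambda>y. beta_density a b y * y powr e) (Beta (a + e) b / Beta a b)"
proof -
  let ?k = "\<lambda>y. y powr (a + e - 1) * (1 - y) powr (b - 1)"
  have "(?k has_integral Beta (a + e) b) {0<..<1}"
    using has_integral_Beta_real[of "a + e" b] assms by (simp add: has_integral_Icc_iff_Ioo)
  then have "integral\<^sup>N lborel (\<lambda>y. ennreal (?k y) * indicator {0<..<1} y) = ennreal (Beta (a + e) b)"
    by (intro nn_integral_has_integral_lebesgue') auto
  moreover have "ennreal (?k y) * indicator {0<..<1} y = ennreal (indicator {0<..<1} y * ?k y)" for y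
    by (simp add: indicator_def)
  ultimately have "integral\<^sup>N lborel (\<lambda>y. ennreal (indicator {0<..<1} y * ?k y)) = ennreal (Beta (a + e) b)"
    by simp
  then have "has_bochner_integral lborel (\<lambda>y. indicator {0<..<1} y * ?k y) (Beta (a + e) b)"
    using Beta_real_pos[of "a + e" b] assms
    by (intro has_bochner_integral_nn_integral) (auto simp: indicator_def)
  then have "has_bochner_integral lborel (\<lambda>y. indicator {0<..<1} y * ?k y / Beta a b) (Beta (a + e) b / Beta a b)"
    by (rule has_bochner_integral_divide_zero)
  then show ?thesis
  proof (rule has_bochner_integral_cong[THEN iffD1, rotated -1])
    fix y :: real
    have "y powr (a + e - 1) = y powr (a - 1) * y powr e"
      using powr_add[of y "a - 1" e] by (simp add: algebra_simps)
    then show "indicator {0<..<1} y * ?k y / Beta a b = beta_density a b y * y powr e"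
      unfolding beta_density_def by (simp add: mult_ac)
  qed simp_all
qed

lemma Beta_plus1_left_real:
  fixes a b :: real
  assumes "0 < a" "0 < b"
  shows "Beta (a + 1) b = a / (a + b) * Beta a b"
proof -
  have "a \<notin> \<int>\<^sub>\<le>\<^sub>0" using assms(1) nonpos_Ints_nonpos by force
  then have eq: "(a + b) * Beta (a + 1) b = a * Beta a b" by (rule Beta_plus1_left)
  have "Beta (a + 1) b = (a + b) * Beta (a + 1) b / (a + b)" using assms by simp
  also have "\<dots> = a / (a + b) * Beta a b" unfolding eq by simp
  finally show ?thesis .
qed

lemma Beta_minus1_ratio:
  fixes a b :: real
  assumes "1 < a" "0 < b"
  shows "Beta (a - 1) b / Beta a b = (a + b - 1) / (a - 1)"
proof -
  have eq: "Beta a b = (a - 1) / (a + b - 1) * Beta (a - 1) b"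
    using Beta_plus1_left_real[of "a - 1" b] assms by (simp add: algebra_simps)
  have "0 < Beta (a - 1) b" using assms by (intro Beta_real_pos) auto
  then show ?thesis unfolding eq using assms by (simp add: field_simps)
qed

context
  fixes a b :: real
  assumes a: "0 < a" and b: "0 < b"
begin

lemma has_bochner_integral_beta_density: "has_bochner_integral lborel (beta_density a b) 1"
proof -
  have "has_bochner_integral lborel (\<lambda>y. beta_density a b y * y powr 0) 1"
    using has_bochner_integral_beta_density_powr[of a b 0] a b Beta_real_pos[of a b] by simp
  then have "has_bochner_integral lborel (\<lambda>y. beta_density a b y * 1) 1"
    by (rule has_bochner_integral_beta_density_cong) simp
  then show ?thesis by simp
qed

lemma has_bochner_integral_beta_mean:
  "has_bochner_integral lborel (\<lambda>y. beta_density a b y * y) (a / (a + b))"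
proof -
  have "has_bochner_integral lborel (\<lambda>y. beta_density a b y * y powr 1) (a / (a + b))"
    using has_bochner_integral_beta_density_powr[of a b 1] a b Beta_real_pos[of a b]
    by (simp add: Beta_plus1_left_real)
  then show ?thesis by (rule has_bochner_integral_beta_density_cong) simp
qed

lemma has_bochner_integral_beta_second_moment:
  "has_bochner_integral lborel (\<lambda>y. beta_density a b y * y\<^sup>2) (a * (a + 1) / ((a + b) * (a + b + 1)))"
proof -
  have "Beta (a + 2) b = (a + 1) / (a + b + 1) * (a / (a + b) * Beta a b)"
    using Beta_plus1_left_real[of "a + 1" b] Beta_plus1_left_real[of a b] a b
    by (simp add: add_ac)
  then have "has_bochner_integral lborel (\<lambda>y. beta_density a b y * y powr 2) (a * (a + 1) / ((a + b) * (a + b + 1)))"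
    using has_bochner_integral_beta_density_powr[of a b 2] a b Beta_real_pos[of a b] by (simp add: mult_ac)
  then show ?thesis by (rule has_bochner_integral_beta_density_cong) (simp add: powr_realpow)
qed

lemma has_bochner_integral_beta_inverse_moment:
  assumes "1 < a"
  shows "has_bochner_integral lborel (\<lambda>y. beta_density a b y * (1 / y)) ((a + b - 1) / (a - 1))"
proof -
  have "has_bochner_integral lborel (\<lambda>y. beta_density a b y * y powr -1) ((a + b - 1) / (a - 1))"
    using has_bochner_integral_beta_density_powr[of a b "-1"] Beta_minus1_ratio[of a b] assms b by simp
  then show ?thesis by (rule has_bochner_integral_beta_density_cong) (simp add: powr_neg_one)
qed

lemma has_bochner_integral_beta_inverse_square_moment:
  assumes "2 < a"
  shows "has_bochner_integral lborel (\<lambda>y. beta_density a b y * (1 / y\<^sup>2))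
           ((a + b - 1) * (a + b - 2) / ((a - 1) * (a - 2)))"
proof -
  have "Beta (a - 2) b / Beta a b = (Beta (a - 1 - 1) b / Beta (a - 1) b) * (Beta (a - 1) b / Beta a b)"
    using Beta_real_pos[of "a - 1" b] assms b by simp
  also have "\<dots> = (a + b - 2) / (a - 2) * ((a + b - 1) / (a - 1))"
    using Beta_minus1_ratio[of "a - 1" b] Beta_minus1_ratio[of a b] assms b by simp
  finally have "has_bochner_integral lborel (\<lambda>y. beta_density a b y * y powr -2)
                  ((a + b - 1) * (a + b - 2) / ((a - 1) * (a - 2)))"
    using has_bochner_integral_beta_density_powr[of a b "-2"] assms b by (simp add: mult_ac)
  then show ?thesis
    by (rule has_bochner_integral_beta_density_cong) (simp add: powr_minus powr_realpow divide_inverse)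
qed

end

lemma has_bochner_integral_beta_affine:
  assumes "0 < a" "0 < b"
  shows "has_bochner_integral lborel (\<lambda>y. beta_density a b y * (c + d * y)) (c + d * (a / (a + b)))"
proof -
  have "has_bochner_integral lborel (\<lambda>y. c * beta_density a b y + d * (beta_density a b y * y))
          (c * 1 + d * (a / (a + b)))"
    using assms
    by (intro has_bochner_integral_add has_bochner_integral_mult_right
          has_bochner_integral_beta_density has_bochner_integral_beta_mean)
  then show ?thesis by (simp add: algebra_simps)
qed

context
  fixes m s :: real
  assumes m: "0 < m" "m < 1"
begin

lemma has_bochner_integral_beta_chi_square:
  assumes ms: "1 < m * s"
  shows "has_bochner_integral lborel (\<lambda>y. beta_density (m * s) ((1 - m) * s) y * ((y - m)\<^sup>2 / y))
           (m * (1 - m) / (m * s - 1))"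
proof -
  let ?f = "beta_density (m * s) ((1 - m) * s)"
  have "0 < m * s" using ms by linarith
  then have s: "0 < s" using m by (simp add: zero_less_mult_iff)
  have ab: "m * s + (1 - m) * s = s" by (simp add: algebra_simps)
  have "has_bochner_integral lborel (\<lambda>y. ?f y * y - 2 * m * ?f y + m\<^sup>2 * (?f y * (1 / y)))
          (m * s / s - 2 * m * 1 + m\<^sup>2 * ((s - 1) / (m * s - 1)))"
    using has_bochner_integral_beta_mean[of "m * s" "(1 - m) * s"]
      has_bochner_integral_beta_density[of "m * s" "(1 - m) * s"]
      has_bochner_integral_beta_inverse_moment[of "m * s" "(1 - m) * s"] m s ms
    unfolding ab by (intro has_bochner_integral_add has_bochner_integral_diff has_bochner_integral_mult_right) auto
  moreover have "m * s / s - 2 * m * 1 + m\<^sup>2 * ((s - 1) / (m * s - 1)) = m * (1 - m) / (m * s - 1)"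
    using s ms by (simp add: field_simps power2_eq_square)
  ultimately have "has_bochner_integral lborel (\<lambda>y. ?f y * (y - 2 * m + m\<^sup>2 / y)) (m * (1 - m) / (m * s - 1))"
    by (simp add: algebra_simps)
  then show ?thesis
    by (rule has_bochner_integral_beta_density_cong) (simp add: field_simps power2_eq_square)
qed

lemma has_bochner_integral_beta_chi_square_squared:
  assumes ms: "2 < m * s"
  shows "has_bochner_integral lborel (\<lambda>y. beta_density (m * s) ((1 - m) * s) y * ((y - m) ^ 4 / y\<^sup>2))
           ((2 * m * (1 + 2 * m - 4 * m\<^sup>2 + m ^ 3) + 3 * s * m\<^sup>2 * (1 - m)\<^sup>2)
              / ((s + 1) * (m * s - 1) * (m * s - 2)))"
proof -
  let ?f = "beta_density (m * s) ((1 - m) * s)"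
  have "0 < m * s" using ms by linarith
  then have s: "0 < s" using m by (simp add: zero_less_mult_iff)
  have ab: "m * s + (1 - m) * s = s" by (simp add: algebra_simps)
  have "has_bochner_integral lborel
          (\<lambda>y. ?f y * y\<^sup>2 - 4 * m * (?f y * y) + 6 * m\<^sup>2 * ?f y - 4 * m ^ 3 * (?f y * (1 / y))
               + m ^ 4 * (?f y * (1 / y\<^sup>2)))
          (m * s * (m * s + 1) / (s * (s + 1)) - 4 * m * (m * s / s) + 6 * m\<^sup>2 * 1
               - 4 * m ^ 3 * ((s - 1) / (m * s - 1)) + m ^ 4 * ((s - 1) * (s - 2) / ((m * s - 1) * (m * s - 2))))"
    using has_bochner_integral_beta_second_moment[of "m * s" "(1 - m) * s"]
      has_bochner_integral_beta_mean[of "m * s" "(1 - m) * s"]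
      has_bochner_integral_beta_density[of "m * s" "(1 - m) * s"]
      has_bochner_integral_beta_inverse_moment[of "m * s" "(1 - m) * s"]
      has_bochner_integral_beta_inverse_square_moment[of "m * s" "(1 - m) * s"] m s ms
    unfolding ab by (intro has_bochner_integral_add has_bochner_integral_diff has_bochner_integral_mult_right) auto
  moreover have "m * s * (m * s + 1) / (s * (s + 1)) - 4 * m * (m * s / s) + 6 * m\<^sup>2 * 1
               - 4 * m ^ 3 * ((s - 1) / (m * s - 1)) + m ^ 4 * ((s - 1) * (s - 2) / ((m * s - 1) * (m * s - 2)))
      = (2 * m * (1 + 2 * m - 4 * m\<^sup>2 + m ^ 3) + 3 * s * m\<^sup>2 * (1 - m)\<^sup>2)
              / ((s + 1) * (m * s - 1) * (m * s - 2))"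
  proof -
    have ne: "s \<noteq> 0" "s + 1 \<noteq> 0" "m * s - 1 \<noteq> 0" "m * s - 2 \<noteq> 0" using s ms by auto
    have "m * s * (m * s + 1) / (s * (s + 1)) = m * (m * s + 1) / (s + 1)" "m * s / s = m"
      using ne by (simp_all add: divide_simps)
    then show ?thesis
      using ne by (simp add: divide_simps) (simp add: algebra_simps power2_eq_square power3_eq_cube power4_eq_xxxx)
  qed
  ultimately have "has_bochner_integral lborel
      (\<lambda>y. ?f y * (y\<^sup>2 - 4 * m * y + 6 * m\<^sup>2 - 4 * m ^ 3 / y + m ^ 4 / y\<^sup>2))
      ((2 * m * (1 + 2 * m - 4 * m\<^sup>2 + m ^ 3) + 3 * s * m\<^sup>2 * (1 - m)\<^sup>2) / ((s + 1) * (m * s - 1) * (m * s - 2)))"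
    by (simp add: algebra_simps)
  then show ?thesis
    by (rule has_bochner_integral_beta_density_cong) (simp add: field_simps power2_eq_square power3_eq_cube power4_eq_xxxx)
qed

end

lemma beta_chi_square_le:
  fixes m s :: real
  assumes "0 < m" "m < 1" "2 \<le> m * s"
  shows "m * (1 - m) / (m * s - 1) \<le> 2 / s"
proof -
  have "0 < m * s" using assms by linarith
  then have s: "0 < s" using assms by (simp add: zero_less_mult_iff)
  have "m * (1 - m) * s \<le> m * s" using assms s by (simp add: algebra_simps)
  also have "\<dots> \<le> 2 * (m * s - 1)" using assms by simp
  finally show ?thesis using assms s by (simp add: field_simps)
qed

lemma beta_chi_square_squared_le:
  fixes m s :: real
  assumes m: "0 < m" "m < 1" and ms: "4 \<le> m * s"
  shows "(2 * m * (1 + 2 * m - 4 * m\<^sup>2 + m ^ 3) + 3 * s * m\<^sup>2 * (1 - m)\<^sup>2)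
           / ((s + 1) * (m * s - 1) * (m * s - 2)) \<le> 44 / (m\<^sup>2 * s\<^sup>2)"
proof -
  have "0 < m * s" using ms by linarith
  then have s: "0 < s" using m by (simp add: zero_less_mult_iff)
  have "m * s \<le> 1 * s" using m s by (intro mult_right_mono) auto
  then have s1: "1 \<le> s" using ms by simp
  have "m ^ 3 \<le> 1" "m\<^sup>2 \<le> 1" "(1 - m)\<^sup>2 \<le> 1" using m by (auto intro: power_le_one)
  moreover have "0 \<le> m\<^sup>2" by simp
  ultimately have "1 + 2 * m - 4 * m\<^sup>2 + m ^ 3 \<le> 4" "m\<^sup>2 * (1 - m)\<^sup>2 \<le> 1"
    using m by (linarith, intro mult_le_one) auto
  then have "2 * m * (1 + 2 * m - 4 * m\<^sup>2 + m ^ 3) \<le> 2 * m * 4" "s * (m\<^sup>2 * (1 - m)\<^sup>2) \<le> s * 1"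
    using m s by (intro mult_left_mono; simp)+
  moreover have "2 * m * 4 \<le> 8" using m by simp
  ultimately have num: "2 * m * (1 + 2 * m - 4 * m\<^sup>2 + m ^ 3) + 3 * s * m\<^sup>2 * (1 - m)\<^sup>2 \<le> 11 * s"
    using s1 by (simp only: mult.assoc)
  have "s * (m * s / 2) * (m * s / 2) \<le> (s + 1) * (m * s - 1) * (m * s - 2)"
    using ms s by (intro mult_mono) auto
  moreover have "s * (m * s / 2) * (m * s / 2) = m\<^sup>2 * s ^ 3 / 4"
    by (simp add: power2_eq_square power3_eq_cube)
  ultimately have den: "m\<^sup>2 * s ^ 3 / 4 \<le> (s + 1) * (m * s - 1) * (m * s - 2)"
    by simp
  have "(2 * m * (1 + 2 * m - 4 * m\<^sup>2 + m ^ 3) + 3 * s * m\<^sup>2 * (1 - m)\<^sup>2)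
           / ((s + 1) * (m * s - 1) * (m * s - 2)) \<le> 11 * s / (m\<^sup>2 * s ^ 3 / 4)"
    using num den m s by (intro frac_le) auto
  also have "\<dots> = 44 / (m\<^sup>2 * s\<^sup>2)" using m s by (simp add: field_simps power2_eq_square power3_eq_cube)
  finally show ?thesis .
qed

section \<open>Beta laws rescaled to (0, 1/2)\<close>

lemma rbeta_eq_density: "rbeta a b = density lborel (\<lambda>\<theta>. ennreal (2 * beta_density a b (2 * \<theta>)))"
proof (rule measure_eqI)
  show "sets (rbeta a b) = sets (density lborel (\<lambda>\<theta>. ennreal (2 * beta_density a b (2 * \<theta>))))"
    by (simp add: rbeta_def)
  fix A assume "A \<in> sets (rbeta a b)"
  then have [measurable]: "A \<in> sets borel" by (simp add: rbeta_def)
  have "(\<lambda>y::real. y / 2) -` A \<inter> space borel \<in> sets borel" by measurable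
  then have [measurable]: "(\<lambda>y::real. y / 2) -` A \<in> sets borel" by simp
  have "emeasure (rbeta a b) A = (\<integral>\<^sup>+ y. ennreal (beta_density a b y) * indicator A (y / 2) \<partial>lborel)"
    unfolding rbeta_def beta_measure_eq_density
    by (subst emeasure_distr) (auto simp: emeasure_density intro!: nn_integral_cong split: split_indicator)
  also have "\<dots> = 2 * (\<integral>\<^sup>+ \<theta>. ennreal (beta_density a b (0 + 2 * \<theta>)) * indicator A ((0 + 2 * \<theta>) / 2) \<partial>lborel)"
    by (subst nn_integral_real_affine[where c = 2 and t = 0]) auto
  also have "\<dots> = (\<integral>\<^sup>+ \<theta>. ennreal (2 * beta_density a b (2 * \<theta>)) * indicator A \<theta> \<partial>lborel)"
    by (subst nn_integral_cmult[symmetric]) (auto simp: ennreal_mult' mult.assoc intro!: nn_integral_cong)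
  also have "\<dots> = emeasure (density lborel (\<lambda>\<theta>. ennreal (2 * beta_density a b (2 * \<theta>)))) A"
    by (subst emeasure_density) auto
  finally show "emeasure (rbeta a b) A = emeasure (density lborel (\<lambda>\<theta>. ennreal (2 * beta_density a b (2 * \<theta>)))) A" .
qed

lemma AE_rbeta: "AE \<theta> in rbeta a b. 0 < \<theta> \<and> \<theta> < 1/2"
  unfolding rbeta_eq_density by (subst AE_density) (auto simp: beta_density_def indicator_def)

lemma nn_integral_rbeta_eq_integral:
  fixes h :: "real \<Rightarrow> real"
  assumes [measurable]: "h \<in> borel_measurable borel" and ab: "0 < a" "0 < b"
    and I: "has_bochner_integral lborel (\<lambda>y. beta_density a b y * h y) I"
    and nonneg: "\<And>y. 0 < y \<Longrightarrow> y < 1 \<Longrightarrow> 0 \<le> h y"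
  shows "(\<integral>\<^sup>+ \<theta>. ennreal (h (2 * \<theta>)) \<partial>rbeta a b) = ennreal I"
proof -
  have integrand_nonneg: "0 \<le> beta_density a b y * h y" for y
    using nonneg[of y] beta_density_nonneg[OF ab, of y] beta_density_eq_0[of y a b]
    by (cases "0 < y \<and> y < 1") auto
  have "(\<integral>\<^sup>+ \<theta>. ennreal (h (2 * \<theta>)) \<partial>rbeta a b)
      = (\<integral>\<^sup>+ y. ennreal (beta_density a b y) * ennreal (h (2 * (y / 2))) \<partial>lborel)"
    unfolding rbeta_def beta_measure_eq_density
    by (subst nn_integral_distr) (auto simp: nn_integral_density)
  also have "\<dots> = (\<integral>\<^sup>+ y. ennreal (beta_density a b y * h y) \<partial>lborel)"
  proof (rule nn_integral_cong)
    fix y :: real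
    show "ennreal (beta_density a b y) * ennreal (h (2 * (y / 2))) = ennreal (beta_density a b y * h y)"
      using nonneg[of y] beta_density_nonneg[OF ab, of y] beta_density_eq_0[of y a b]
      by (cases "0 < y \<and> y < 1") (auto simp: ennreal_mult)
  qed
  also have "\<dots> = ennreal I"
    using I integrand_nonneg by (subst nn_integral_eq_integral) (auto simp: has_bochner_integral_iff)
  finally show ?thesis .
qed

lemma nn_integral_rbeta_le:
  fixes f h :: "real \<Rightarrow> real"
  assumes "h \<in> borel_measurable borel" and "0 < a" "0 < b"
    and "has_bochner_integral lborel (\<lambda>y. beta_density a b y * h y) I"
    and "\<And>y. 0 < y \<Longrightarrow> y < 1 \<Longrightarrow> 0 \<le> h y"
    and le: "\<And>\<theta>. 0 < \<theta> \<Longrightarrow> \<theta> < 1/2 \<Longrightarrow> f \<theta> \<le> h (2 * \<theta>)"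
  shows "(\<integral>\<^sup>+ \<theta>. ennreal (f \<theta>) \<partial>rbeta a b) \<le> ennreal I"
proof -
  have "(\<integral>\<^sup>+ \<theta>. ennreal (f \<theta>) \<partial>rbeta a b) \<le> (\<integral>\<^sup>+ \<theta>. ennreal (h (2 * \<theta>)) \<partial>rbeta a b)"
    using AE_rbeta by (rule nn_integral_mono_AE[OF AE_mp]) (auto intro!: AE_I2 ennreal_leI le)
  also have "\<dots> = ennreal I" using assms by (intro nn_integral_rbeta_eq_integral)
  finally show ?thesis .
qed

lemma has_bochner_integral_beta_density_scaled:
  assumes "has_bochner_integral lborel (\<lambda>y. beta_density a b y * h y) I"
  shows "has_bochner_integral lborel (\<lambda>\<theta>. 2 * beta_density a b (2 * \<theta>) * h (2 * \<theta>)) I"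
proof -
  have "has_bochner_integral lborel (\<lambda>\<theta>. beta_density a b (0 + 2 * \<theta>) * h (0 + 2 * \<theta>)) (I /\<^sub>R \<bar>2\<bar>)"
    using assms by (subst (asm) lborel_has_bochner_integral_real_affine_iff[where c = 2 and t = 0]) auto
  then have "has_bochner_integral lborel (\<lambda>\<theta>. 2 * (beta_density a b (0 + 2 * \<theta>) * h (0 + 2 * \<theta>))) (2 * (I /\<^sub>R \<bar>2\<bar>))"
    by (rule has_bochner_integral_mult_right)
  then show ?thesis by (simp add: mult.assoc)
qed

section \<open>Kullback-Leibler divergence between rescaled Beta laws\<close>

lemma ln_le_tangent: "0 < y \<Longrightarrow> 0 < m \<Longrightarrow> ln y \<le> ln m + (y - m) / (m::real)"
  using ln_le_minus_one[of "y / m"] by (simp add: ln_div diff_divide_distrib)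

(* No integrability of f is needed: a non-integrable function has integral 0. *)
lemma integral_le_max_0:
  fixes f g :: "'a \<Rightarrow> real"
  assumes "integrable M g" "\<And>x. f x \<le> g x"
  shows "integral\<^sup>L M f \<le> max 0 (integral\<^sup>L M g)"
proof (cases "integrable M f")
  case True
  then show ?thesis using integral_mono[OF True assms] by simp
qed (simp add: not_integrable_integral_eq)

lemma KL_rbeta_eq_integral:
  assumes ab: "0 < a" "0 < b" and \<alpha>\<beta>: "0 < \<alpha>" "0 < \<beta>"
  shows "KL (rbeta \<alpha> \<beta>) (rbeta a b)
           = (\<integral>\<theta>. 2 * beta_density \<alpha> \<beta> (2 * \<theta>) * ln (beta_density \<alpha> \<beta> (2 * \<theta>) / beta_density a b (2 * \<theta>)) \<partial>lborel)"
proof -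
  define g where "g \<theta> = 2 * beta_density \<alpha> \<beta> (2 * \<theta>)" for \<theta>
  define f where "f \<theta> = 2 * beta_density a b (2 * \<theta>)" for \<theta>
  have "KL (rbeta \<alpha> \<beta>) (rbeta a b) = KL_divergence (exp 1) (density lborel f) (density lborel g)"
    unfolding KL_def rbeta_eq_density f_def g_def ..
  also have "\<dots> = (\<integral>\<theta>. g \<theta> * log (exp 1) (g \<theta> / f \<theta>) \<partial>lborel)"
  proof (rule sigma_finite_measure.KL_density_density[OF sigma_finite_lborel])
    show "f \<in> borel_measurable lborel" "g \<in> borel_measurable lborel"
      unfolding f_def g_def by measurable
    show "AE \<theta> in lborel. 0 \<le> f \<theta>" "AE \<theta> in lborel. 0 \<le> g \<theta>"
      unfolding f_def g_def using beta_density_nonneg ab \<alpha>\<beta> by auto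
    show "AE \<theta> in lborel. f \<theta> = 0 \<longrightarrow> g \<theta> = 0"
    proof (intro AE_I2 impI)
      fix \<theta> assume "f \<theta> = 0"
      then have "\<not> (0 < 2 * \<theta> \<and> 2 * \<theta> < 1)"
        using beta_density_pos[OF ab, of "2 * \<theta>"] unfolding f_def by auto
      then show "g \<theta> = 0" unfolding g_def by (simp add: beta_density_eq_0)
    qed
  qed simp
  also have "\<dots> = (\<integral>\<theta>. 2 * beta_density \<alpha> \<beta> (2 * \<theta>) * ln (beta_density \<alpha> \<beta> (2 * \<theta>) / beta_density a b (2 * \<theta>)) \<partial>lborel)"
    by (simp add: f_def g_def log_def)
  finally show ?thesis .
qed

lemma ln_beta_density_ratio_le:
  assumes ab: "0 < a" "0 < b" and le: "a \<le> \<alpha>" "b \<le> \<beta>" and y: "0 < y" "y < 1" and m: "0 < m" "m < 1"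
  shows "ln (beta_density \<alpha> \<beta> y / beta_density a b y)
           \<le> ln (Beta a b) - ln (Beta \<alpha> \<beta>) + (\<alpha> - a) * (ln m + (y - m) / m)
              + (\<beta> - b) * (ln (1 - m) + (m - y) / (1 - m))"
proof -
  have \<alpha>\<beta>: "0 < \<alpha>" "0 < \<beta>" using ab le by auto
  have "ln (beta_density \<alpha> \<beta> y / beta_density a b y)
      = ln (Beta a b) - ln (Beta \<alpha> \<beta>) + (\<alpha> - a) * ln y + (\<beta> - b) * ln (1 - y)"
    using beta_density_pos[OF \<alpha>\<beta> y] beta_density_pos[OF ab y] ln_beta_density[OF \<alpha>\<beta> y] ln_beta_density[OF ab y]
    by (simp add: ln_div algebra_simps)
  also have "\<dots> \<le> ln (Beta a b) - ln (Beta \<alpha> \<beta>) + (\<alpha> - a) * (ln m + (y - m) / m)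
              + (\<beta> - b) * (ln (1 - m) + (m - y) / (1 - m))"
    using le ln_le_tangent[of y m] ln_le_tangent[of "1 - y" "1 - m"] y m
    by (intro add_mono mult_left_mono order.refl) auto
  finally show ?thesis .
qed

lemma KL_rbeta_le:
  fixes a b \<alpha> \<beta> :: real
  assumes ab: "0 < a" "0 < b" and le: "a \<le> \<alpha>" "b \<le> \<beta>"
  defines "m \<equiv> \<alpha> / (\<alpha> + \<beta>)"
  shows "KL (rbeta \<alpha> \<beta>) (rbeta a b)
           \<le> max 0 (ln (Beta a b) - ln (Beta \<alpha> \<beta>) + (\<alpha> - a) * ln m + (\<beta> - b) * ln (1 - m))"
proof -
  have \<alpha>\<beta>: "0 < \<alpha>" "0 < \<beta>" using ab le by auto
  have m: "0 < m" "m < 1" using \<alpha>\<beta> unfolding m_def by (auto simp: field_simps)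
  define c where "c = ln (Beta a b) - ln (Beta \<alpha> \<beta>) + (\<alpha> - a) * (ln m - 1) + (\<beta> - b) * (ln (1 - m) + m / (1 - m))"
  define d where "d = (\<alpha> - a) / m - (\<beta> - b) / (1 - m)"
  have H: "c + d * y = ln (Beta a b) - ln (Beta \<alpha> \<beta>) + (\<alpha> - a) * (ln m + (y - m) / m)
              + (\<beta> - b) * (ln (1 - m) + (m - y) / (1 - m))" for y
  proof -
    have e1: "(y - m) / m = y / m - 1" and e2: "(m - y) / (1 - m) = m / (1 - m) - y / (1 - m)"
      using m by (simp_all add: diff_divide_distrib)
    show ?thesis unfolding c_def d_def e1 e2 by (simp add: algebra_simps)
  qed
  let ?g = "\<lambda>\<theta>. 2 * beta_density \<alpha> \<beta> (2 * \<theta>)"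
  have int: "has_bochner_integral lborel (\<lambda>\<theta>. ?g \<theta> * (c + d * (2 * \<theta>))) (c + d * m)"
    using has_bochner_integral_beta_density_scaled[OF has_bochner_integral_beta_affine[OF \<alpha>\<beta>, of c d]]
    unfolding m_def .
  have "KL (rbeta \<alpha> \<beta>) (rbeta a b) \<le> max 0 (\<integral>\<theta>. ?g \<theta> * (c + d * (2 * \<theta>)) \<partial>lborel)"
    unfolding KL_rbeta_eq_integral[OF ab \<alpha>\<beta>]
  proof (rule integral_le_max_0)
    show "integrable lborel (\<lambda>\<theta>. ?g \<theta> * (c + d * (2 * \<theta>)))"
      using int by (simp add: has_bochner_integral_iff)
    show "?g \<theta> * ln (beta_density \<alpha> \<beta> (2 * \<theta>) / beta_density a b (2 * \<theta>)) \<le> ?g \<theta> * (c + d * (2 * \<theta>))" for \<theta>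
      using ln_beta_density_ratio_le[OF ab le _ _ m, of "2 * \<theta>"] beta_density_nonneg[OF \<alpha>\<beta>, of "2 * \<theta>"]
        beta_density_eq_0[of "2 * \<theta>" \<alpha> \<beta>]
      unfolding H by (cases "0 < 2 * \<theta> \<and> 2 * \<theta> < 1") (auto intro: mult_left_mono)
  qed
  also have "(\<integral>\<theta>. ?g \<theta> * (c + d * (2 * \<theta>)) \<partial>lborel) = c + d * m"
    using int by (simp add: has_bochner_integral_iff)
  finally show ?thesis unfolding H by simp
qed

lemma one_plus_inverse_power_le_exp1: "(1 + 1 / real j) ^ j \<le> exp 1"
proof (cases "j = 0")
  case False
  have "(1 + 1 / real j) ^ j \<le> exp (1 / real j) ^ j"
    by (intro power_mono) (auto simp: exp_ge_add_one_self add.commute)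
  also have "\<dots> = exp 1" using False by (simp add: exp_of_nat_mult[symmetric])
  finally show ?thesis .
qed simp

lemma exp1_le_one_plus_inverse_power:
  assumes "0 < j"
  shows "exp 1 \<le> (1 + 1 / real j) ^ (j + 1)"
proof -
  have pos: "0 < 1 + 1 / real j" by (simp add: add_pos_nonneg)
  have "ln (1 / (1 + 1 / real j)) \<le> 1 / (1 + 1 / real j) - 1"
    using pos by (intro ln_le_minus_one) auto
  then have "1 / (real j + 1) \<le> ln (1 + 1 / real j)"
    using assms by (simp add: ln_div field_simps)
  then have "1 \<le> real (j + 1) * ln (1 + 1 / real j)"
    using assms by (simp add: field_simps)
  then have "1 \<le> ln ((1 + 1 / real j) ^ (j + 1))"
    by (simp only: ln_realpow)
  then show ?thesis using pos by (simp add: ln_ge_iff)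
qed

lemma power_self_le_exp_fact: "real j ^ j \<le> exp (real j) * fact j"
proof (induction j)
  case (Suc j)
  show ?case
  proof (cases "j = 0")
    case True
    then show ?thesis using exp_ge_add_one_self[of 1] by simp
  next
    case False
    have "real (Suc j) ^ Suc j = real (Suc j) * ((1 + 1 / real j) ^ j * real j ^ j)"
      using False by (simp add: field_simps power_mult_distrib[symmetric])
    also have "\<dots> \<le> real (Suc j) * (exp 1 * (exp (real j) * fact j))"
      using one_plus_inverse_power_le_exp1[of j] Suc.IH by (intro mult_left_mono mult_mono) auto
    also have "\<dots> = exp (real (Suc j)) * fact (Suc j)"
      by (simp add: exp_add[symmetric] algebra_simps)
    finally show ?thesis .
  qed
qed simp

lemma fact_mult_exp_le_power:
  "0 < j \<Longrightarrow> fact j * exp (real j) \<le> exp 1 * real j ^ (j + 1)"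
proof (induction j rule: nat_induct_non_zero)
  case 1
  show ?case by simp
next
  case (Suc j)
  have "fact (Suc j) * exp (real (Suc j)) = real (Suc j) * exp 1 * (fact j * exp (real j))"
    by (simp add: exp_add[symmetric] algebra_simps)
  also have "\<dots> \<le> real (Suc j) * exp 1 * (exp 1 * real j ^ (j + 1))"
    using Suc.IH by (intro mult_left_mono) auto
  also have "\<dots> \<le> real (Suc j) * exp 1 * ((1 + 1 / real j) ^ (j + 1) * real j ^ (j + 1))"
    using exp1_le_one_plus_inverse_power[OF Suc.hyps] by (intro mult_left_mono mult_right_mono) auto
  also have "\<dots> = exp 1 * real (Suc j) ^ (Suc j + 1)"
    using Suc.hyps by (simp add: power_mult_distrib[symmetric] field_simps)
  finally show ?case .
qed

lemma x_ln_x_minus_x_mono: "1 \<le> u \<Longrightarrow> u \<le> v \<Longrightarrow> u * ln u - u \<le> v * ln v - (v::real)"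
  by (rule DERIV_nonneg_imp_nondecreasing[of u v])
     (auto intro!: exI[of _ "ln _"] derivative_eq_intros)

lemma ln_Gamma_ge:
  fixes x :: real
  assumes "3 \<le> x"
  shows "(x - 2) * ln (x - 2) - (x - 2) \<le> ln (Gamma x)"
proof -
  define k where "k = nat \<lfloor>x\<rfloor> - 1"
  have k: "real k + 1 \<le> x" "x < real k + 2" "2 \<le> k" using assms unfolding k_def by linarith+
  have "fact k = Gamma (real k + 1)"
    using Gamma_fact[of k, where 'a = real] by (simp add: add.commute)
  also have "\<dots> \<le> Gamma x"
    using k Gamma_real_strict_mono[of "real k + 1" x] by (cases "real k + 1 = x") auto
  finally have "ln (fact k) \<le> ln (Gamma x)"
    by (intro ln_mono) auto
  moreover have "ln (real k ^ k) \<le> ln (exp (real k) * fact k)"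
    using k power_self_le_exp_fact[of k] by (intro ln_mono) auto
  then have "real k * ln (real k) - real k \<le> ln (fact k)"
    by (simp add: ln_realpow ln_mult)
  moreover have "(x - 2) * ln (x - 2) - (x - 2) \<le> real k * ln (real k) - real k"
    using k by (intro x_ln_x_minus_x_mono) auto
  ultimately show ?thesis by linarith
qed

lemma ln_Gamma_of_nat_le:
  assumes "0 < n"
  shows "ln (Gamma (real n)) \<le> real n * ln (real n) - real n + 1"
proof -
  have "fact n = real n * Gamma (real n)"
    using Gamma_fact[of "n - 1", where 'a = real] assms fact_reduce[of n, where 'a = real] by (simp add: of_nat_diff)
  then have "Gamma (real n) = fact n / real n"
    using assms by (simp add: field_simps)
  moreover have "ln (fact n * exp (real n)) \<le> ln (exp 1 * real n ^ (n + 1))"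
    using assms fact_mult_exp_le_power[OF assms] by (intro ln_mono) auto
  ultimately show ?thesis
    using assms by (simp add: ln_mult ln_realpow ln_div algebra_simps)
qed

lemma x_ln_x_diff_le: "2 < x \<Longrightarrow> x * ln x - (x - 2) * ln (x - 2) \<le> 2 * ln x + (2::real)"
proof -
  assume x: "2 < x"
  have "(x - 2) * ln (x / (x - 2)) \<le> (x - 2) * (x / (x - 2) - 1)"
    using x by (intro mult_left_mono ln_le_minus_one) auto
  also have "\<dots> = 2" using x by (simp add: field_simps)
  finally show ?thesis using x by (simp add: ln_div algebra_simps)
qed

lemma ln_Beta_ge:
  fixes \<alpha> \<beta> :: real
  assumes "3 \<le> \<alpha>" "3 \<le> \<beta>" "\<alpha> + \<beta> = real n"
  shows "\<alpha> * ln (\<alpha> / real n) + \<beta> * ln (\<beta> / real n) - 2 * ln \<alpha> - 2 * ln \<beta> - 1 \<le> ln (Beta \<alpha> \<beta>)"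
proof -
  have n: "0 < n" using assms by linarith
  have "0 < Gamma \<alpha>" "0 < Gamma \<beta>" "0 < Gamma (real n)" using assms n by auto
  then have "ln (Beta \<alpha> \<beta>) = ln (Gamma \<alpha>) + ln (Gamma \<beta>) - ln (Gamma (real n))"
    unfolding Beta_def assms(3) by (simp add: ln_mult ln_div)
  moreover have "(\<alpha> - 2) * ln (\<alpha> - 2) - (\<alpha> - 2) \<le> ln (Gamma \<alpha>)" "(\<beta> - 2) * ln (\<beta> - 2) - (\<beta> - 2) \<le> ln (Gamma \<beta>)"
    using assms by (auto intro!: ln_Gamma_ge)
  moreover have "\<alpha> * ln \<alpha> - (\<alpha> - 2) * ln (\<alpha> - 2) \<le> 2 * ln \<alpha> + 2" "\<beta> * ln \<beta> - (\<beta> - 2) * ln (\<beta> - 2) \<le> 2 * ln \<beta> + 2"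
    using assms by (auto intro!: x_ln_x_diff_le)
  moreover have "\<alpha> * ln (\<alpha> / real n) + \<beta> * ln (\<beta> / real n) = \<alpha> * ln \<alpha> + \<beta> * ln \<beta> - real n * ln (real n)"
    using assms n by (simp add: ln_div algebra_simps flip: assms(3))
  ultimately show ?thesis using ln_Gamma_of_nat_le[OF n] assms(3) by linarith
qed

lemma ln_le_two_sqrt: "0 < x \<Longrightarrow> ln x \<le> 2 * sqrt x"
  using ln_le_minus_one[of "sqrt x"] by (simp add: ln_sqrt)

lemma KL_rbeta_le_sqrt:
  fixes a b m :: real and n :: nat
  assumes ab: "0 < a" "0 < b" and m: "0 < m" "m < 1"
    and le: "a \<le> m * real n" "b \<le> (1 - m) * real n" and big: "3 \<le> m * real n" "3 \<le> (1 - m) * real n"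
  shows "KL (rbeta (m * real n) ((1 - m) * real n)) (rbeta a b)
     \<le> \<bar>ln (Beta a b)\<bar> + a * \<bar>ln m\<bar> + b * \<bar>ln (1 - m)\<bar> + 1 + 8 * sqrt (real n)"
proof -
  define \<alpha> where "\<alpha> = m * real n"
  define \<beta> where "\<beta> = (1 - m) * real n"
  have sum: "\<alpha> + \<beta> = real n" unfolding \<alpha>_def \<beta>_def by (simp add: algebra_simps)
  have \<alpha>\<beta>: "3 \<le> \<alpha>" "3 \<le> \<beta>" using big unfolding \<alpha>_def \<beta>_def by auto
  have n: "0 < real n" using \<alpha>\<beta> sum by linarith
  have mean: "\<alpha> / (\<alpha> + \<beta>) = m" "\<alpha> / real n = m" "\<beta> / real n = 1 - m"
    using n unfolding sum by (simp_all add: \<alpha>_def \<beta>_def)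
  have "ln \<alpha> \<le> 2 * sqrt \<alpha>" "ln \<beta> \<le> 2 * sqrt \<beta>" using \<alpha>\<beta> by (intro ln_le_two_sqrt; simp)+
  moreover have "sqrt \<alpha> \<le> sqrt (real n)" "sqrt \<beta> \<le> sqrt (real n)" using sum \<alpha>\<beta> by simp_all
  ultimately have ln_le: "ln \<alpha> \<le> 2 * sqrt (real n)" "ln \<beta> \<le> 2 * sqrt (real n)" by linarith+
  have "a * (- ln m) \<le> a * \<bar>ln m\<bar>" "b * (- ln (1 - m)) \<le> b * \<bar>ln (1 - m)\<bar>"
    using ab by (intro mult_left_mono; simp)+
  then have "ln (Beta a b) - ln (Beta \<alpha> \<beta>) + (\<alpha> - a) * ln m + (\<beta> - b) * ln (1 - m)
        \<le> \<bar>ln (Beta a b)\<bar> + a * \<bar>ln m\<bar> + b * \<bar>ln (1 - m)\<bar> + 1 + 8 * sqrt (real n)"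
    using ln_Beta_ge[OF \<alpha>\<beta> sum] ln_le unfolding mean by (simp add: algebra_simps)
  moreover have "KL (rbeta \<alpha> \<beta>) (rbeta a b)
      \<le> max 0 (ln (Beta a b) - ln (Beta \<alpha> \<beta>) + (\<alpha> - a) * ln m + (\<beta> - b) * ln (1 - m))"
    using KL_rbeta_le[of a b \<alpha> \<beta>] ab le unfolding \<alpha>_def \<beta>_def mean(1)[unfolded \<alpha>_def \<beta>_def] by simp
  moreover have "0 \<le> \<bar>ln (Beta a b)\<bar> + a * \<bar>ln m\<bar> + b * \<bar>ln (1 - m)\<bar> + 1 + 8 * sqrt (real n)"
    using ab by simp
  ultimately show ?thesis unfolding \<alpha>_def \<beta>_def by (meson max.boundedI order_trans)
qed

section \<open>The log-likelihood ratio of one step\<close>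

lemma two_ln_le: "1 \<le> s \<Longrightarrow> 2 * ln s \<le> s - 1 / (s::real)"
proof -
  assume s: "1 \<le> s"
  have "(\<lambda>x. x - 1 / x - 2 * ln x) 1 \<le> (\<lambda>x. x - 1 / x - 2 * ln x) s"
  proof (rule DERIV_nonneg_imp_nondecreasing[OF s])
    fix x :: real assume x: "1 \<le> x"
    have "DERIV (\<lambda>x. x - 1 / x - 2 * ln x) x :> 1 + 1 / x\<^sup>2 - 2 / x"
      using x by (auto intro!: derivative_eq_intros simp: field_simps power2_eq_square)
    moreover have "1 + 1 / x\<^sup>2 - 2 / x = (1 - 1 / x)\<^sup>2"
      using x by (simp add: field_simps power2_eq_square)
    ultimately show "\<exists>d. DERIV (\<lambda>x. x - 1 / x - 2 * ln x) x :> d \<and> 0 \<le> d" by auto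
  qed
  then show ?thesis by simp
qed

lemma ln_squared_le:
  fixes u :: real
  assumes "0 < u"
  shows "(ln u)\<^sup>2 \<le> (u - 1)\<^sup>2 / u"
proof -
  have ge1: "(ln v)\<^sup>2 \<le> (v - 1)\<^sup>2 / v" if "1 \<le> v" for v :: real
  proof -
    define s where "s = sqrt v"
    have s: "1 \<le> s" "s\<^sup>2 = v" "0 < s" using that by (auto simp: s_def)
    have "ln v = 2 * ln s" using s by (metis ln_realpow of_nat_numeral)
    moreover have "(2 * ln s)\<^sup>2 \<le> (s - 1 / s)\<^sup>2"
      using two_ln_le[OF s(1)] s by (intro power_mono) auto
    moreover have "(s - 1 / s)\<^sup>2 = (v - 1)\<^sup>2 / v"
      using s by (simp add: field_simps power2_eq_square)
    ultimately show ?thesis by simp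
  qed
  show ?thesis
  proof (cases "1 \<le> u")
    case False
    then have "(ln (1 / u))\<^sup>2 \<le> (1 / u - 1)\<^sup>2 / (1 / u)" using assms by (intro ge1) simp
    moreover have "(ln (1 / u))\<^sup>2 = (ln u)\<^sup>2" using assms by (simp add: ln_div)
    moreover have "(1 / u - 1)\<^sup>2 / (1 / u) = (u - 1)\<^sup>2 / u" using assms by (simp add: field_simps power2_eq_square)
    ultimately show ?thesis by simp
  qed (rule ge1)
qed

definition bernoulli_kl :: "real \<Rightarrow> real \<Rightarrow> real" where
  "bernoulli_kl \<theta>0 \<theta> = \<theta>0 * ln (\<theta>0 / \<theta>) + (1 - \<theta>0) * ln ((1 - \<theta>0) / (1 - \<theta>))"

definition bernoulli_llr_second_moment :: "real \<Rightarrow> real \<Rightarrow> real" where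
  "bernoulli_llr_second_moment \<theta>0 \<theta> = \<theta>0 * (ln (\<theta>0 / \<theta>))\<^sup>2 + (1 - \<theta>0) * (ln ((1 - \<theta>0) / (1 - \<theta>)))\<^sup>2"

lemma bernoulli_llr_second_moment_nonneg:
  "0 \<le> \<theta>0 \<Longrightarrow> \<theta>0 \<le> 1 \<Longrightarrow> 0 \<le> bernoulli_llr_second_moment \<theta>0 \<theta>"
  unfolding bernoulli_llr_second_moment_def by simp

lemma bernoulli_kl_nonneg:
  assumes "0 < \<theta>0" "\<theta>0 < 1" "0 < \<theta>" "\<theta> < 1"
  shows "0 \<le> bernoulli_kl \<theta>0 \<theta>"
proof -
  have "\<theta>0 * (1 - \<theta> / \<theta>0) \<le> \<theta>0 * ln (\<theta>0 / \<theta>)"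
    using assms ln_le_minus_one[of "\<theta> / \<theta>0"] by (intro mult_left_mono) (auto simp: ln_div)
  moreover have "(1 - \<theta>0) * (1 - (1 - \<theta>) / (1 - \<theta>0)) \<le> (1 - \<theta>0) * ln ((1 - \<theta>0) / (1 - \<theta>))"
    using assms ln_le_minus_one[of "(1 - \<theta>) / (1 - \<theta>0)"] by (intro mult_left_mono) (auto simp: ln_div)
  moreover have "\<theta>0 * (1 - \<theta> / \<theta>0) + (1 - \<theta>0) * (1 - (1 - \<theta>) / (1 - \<theta>0)) = 0"
    using assms by (simp add: field_simps)
  ultimately show ?thesis unfolding bernoulli_kl_def by linarith
qed

context
  fixes \<theta>0 \<theta> :: real
  assumes \<theta>0: "0 < \<theta>0" "\<theta>0 < 1/2" and \<theta>: "0 < \<theta>" "\<theta> < 1/2"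
begin

lemma bernoulli_kl_le: "bernoulli_kl \<theta>0 \<theta> \<le> (2 * \<theta> - 2 * \<theta>0)\<^sup>2 / (2 * \<theta>)"
proof -
  have "bernoulli_kl \<theta>0 \<theta> \<le> \<theta>0 * (\<theta>0 / \<theta> - 1) + (1 - \<theta>0) * ((1 - \<theta>0) / (1 - \<theta>) - 1)"
    unfolding bernoulli_kl_def using \<theta>0 \<theta>
    by (intro add_mono mult_left_mono ln_le_minus_one) auto
  also have "\<dots> = (\<theta> - \<theta>0)\<^sup>2 / (\<theta> * (1 - \<theta>))"
    using \<theta>0 \<theta> by (simp add: field_simps power2_eq_square)
  also have "\<dots> \<le> (\<theta> - \<theta>0)\<^sup>2 / (\<theta> * (1 / 2))"
    using \<theta> by (intro divide_left_mono mult_left_mono mult_pos_pos) auto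
  also have "\<dots> = (2 * \<theta> - 2 * \<theta>0)\<^sup>2 / (2 * \<theta>)"
    using \<theta> by (simp add: field_simps power2_eq_square)
  finally show ?thesis .
qed

lemma bernoulli_llr_second_moment_le:
  "bernoulli_llr_second_moment \<theta>0 \<theta> \<le> (2 * \<theta> - 2 * \<theta>0)\<^sup>2 / (2 * \<theta>)"
proof -
  have ratio: "q * ((q / p - 1)\<^sup>2 / (q / p)) = (q - p)\<^sup>2 / p" if "0 < p" "0 < q" for p q :: real
    using that by (simp add: field_simps power2_eq_square)
  have "\<theta>0 * (ln (\<theta>0 / \<theta>))\<^sup>2 \<le> \<theta>0 * ((\<theta>0 / \<theta> - 1)\<^sup>2 / (\<theta>0 / \<theta>))"
    using \<theta>0 \<theta> by (intro mult_left_mono ln_squared_le) auto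
  also have "\<dots> = (\<theta> - \<theta>0)\<^sup>2 / \<theta>"
    using ratio[of \<theta> \<theta>0] \<theta>0 \<theta> by (simp add: power2_commute)
  finally have A: "\<theta>0 * (ln (\<theta>0 / \<theta>))\<^sup>2 \<le> (\<theta> - \<theta>0)\<^sup>2 / \<theta>" .
  have "(1 - \<theta>0) * (ln ((1 - \<theta>0) / (1 - \<theta>)))\<^sup>2 \<le> (1 - \<theta>0) * (((1 - \<theta>0) / (1 - \<theta>) - 1)\<^sup>2 / ((1 - \<theta>0) / (1 - \<theta>)))"
    using \<theta>0 \<theta> by (intro mult_left_mono ln_squared_le) auto
  also have "\<dots> = (\<theta> - \<theta>0)\<^sup>2 / (1 - \<theta>)"
    using ratio[of "1 - \<theta>" "1 - \<theta>0"] \<theta>0 \<theta> by (simp add: power2_commute)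
  also have "\<dots> \<le> (\<theta> - \<theta>0)\<^sup>2 / (1 / 2)"
    using \<theta> by (intro divide_left_mono) auto
  also have "\<dots> \<le> (\<theta> - \<theta>0)\<^sup>2 / \<theta>"
  proof -
    have "(2 * \<theta>) * (\<theta> - \<theta>0)\<^sup>2 \<le> 1 * (\<theta> - \<theta>0)\<^sup>2" using \<theta> by (intro mult_right_mono) auto
    then show ?thesis using \<theta> by (simp add: field_simps)
  qed
  finally have B: "(1 - \<theta>0) * (ln ((1 - \<theta>0) / (1 - \<theta>)))\<^sup>2 \<le> (\<theta> - \<theta>0)\<^sup>2 / \<theta>" .
  have "bernoulli_llr_second_moment \<theta>0 \<theta> \<le> 2 * ((\<theta> - \<theta>0)\<^sup>2 / \<theta>)"
    using A B unfolding bernoulli_llr_second_moment_def by linarith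
  also have "\<dots> = (2 * \<theta> - 2 * \<theta>0)\<^sup>2 / (2 * \<theta>)"
    using \<theta> by (simp add: field_simps power2_eq_square)
  finally show ?thesis .
qed

end

section \<open>Path laws of the birth-death chain\<close>

lemma expectation_bind_pmf:
  fixes f :: "'b \<Rightarrow> real"
  assumes "\<And>x. \<bar>f x\<bar> \<le> B"
  shows "measure_pmf.expectation (bind_pmf M N) f
           = measure_pmf.expectation M (\<lambda>x. measure_pmf.expectation (N x) f)"
proof -
  have "integral\<^sup>L (measure_pmf M \<bind> (\<lambda>x. measure_pmf (N x))) f = \<integral>x. integral\<^sup>L (measure_pmf (N x)) f \<partial>measure_pmf M"
    by (rule integral_bind[where K = "count_space UNIV" and B = B and B' = 1])
       (use assms in \<open>auto simp: measure_pmf.emeasure_space_1 measure_pmf_in_subprob_algebra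
          intro: measure_pmf.finite_measure_axioms\<close>)
  then show ?thesis by (simp add: measure_pmf_bind)
qed

lemma integrable_pmf_bounded:
  fixes f :: "'b \<Rightarrow> real"
  assumes "\<And>x. \<bar>f x\<bar> \<le> B"
  shows "integrable (measure_pmf M) f"
  using assms by (intro measure_pmf.integrable_const_bound[where B = B]) auto

definition bd_step_pmf :: "real \<Rightarrow> nat \<Rightarrow> nat pmf" where
  "bd_step_pmf \<theta> i =
     (if i = 0 then return_pmf 1 else map_pmf (\<lambda>up. if up then Suc i else i - 1) (bernoulli_pmf \<theta>))"

lemma pmf_bd_step_pmf:
  assumes "0 \<le> \<theta>" "\<theta> \<le> 1"
  shows "pmf (bd_step_pmf \<theta> i) j = bd_trans \<theta> i j"
proof (cases "i = 0")
  case False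
  have "(\<lambda>up. if up then Suc i else i - 1) -` {j} = (if j = Suc i then {True} else if Suc j = i then {False} else {})"
    using False by (auto split: if_splits)
  then show ?thesis
    using False assms by (simp add: bd_step_pmf_def bd_trans_def pmf_map measure_pmf_single)
qed (simp add: bd_step_pmf_def bd_trans_def indicator_def)

lemma expectation_bd_step_pmf:
  "0 \<le> \<theta> \<Longrightarrow> \<theta> \<le> 1 \<Longrightarrow> measure_pmf.expectation (bd_step_pmf \<theta> i) g
     = (if i = 0 then g 1 else \<theta> * g (Suc i) + (1 - \<theta>) * g (i - 1))"
  by (simp add: bd_step_pmf_def algebra_simps)

text \<open>Paths are extended by \<^term>\<open>undefined\<close> beyond time n, so that they lie in \<^term>\<open>chain_paths n\<close>.\<close>

primrec bd_path_pmf :: "nat pmf \<Rightarrow> real \<Rightarrow> nat \<Rightarrow> (nat \<Rightarrow> nat) pmf" where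
  "bd_path_pmf Q \<theta> 0 = map_pmf (\<lambda>i. (\<lambda>_. undefined)(0 := i)) Q"
| "bd_path_pmf Q \<theta> (Suc n) =
     bind_pmf (bd_path_pmf Q \<theta> n) (\<lambda>x. map_pmf (\<lambda>j. x(Suc n := j)) (bd_step_pmf \<theta> (x n)))"

lemma chain_paths_iff: "x \<in> chain_paths n \<longleftrightarrow> (\<forall>k>n. x k = undefined)"
  unfolding chain_paths_def PiE_def extensional_def by auto

lemma countable_chain_paths: "countable (chain_paths n)"
  unfolding chain_paths_def by (intro countable_PiE) auto

lemma set_pmf_bd_path_pmf: "x \<in> set_pmf (bd_path_pmf Q \<theta> n) \<Longrightarrow> x \<in> chain_paths n"
  by (induction n arbitrary: x) (fastforce simp: chain_paths_iff)+

lemma path_pmf_Suc: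
  "path_pmf q0 \<theta> (Suc n) x = path_pmf q0 \<theta> n x * bd_trans \<theta> (x n) (x (Suc n))"
proof -
  have "{1..Suc n} = insert (Suc n) {1..n}" by auto
  then show ?thesis unfolding path_pmf_def by (simp add: mult.assoc)
qed

lemma path_pmf_cong: "(\<And>k. k \<le> n \<Longrightarrow> x k = y k) \<Longrightarrow> path_pmf q0 \<theta> n x = path_pmf q0 \<theta> n y"
  unfolding path_pmf_def by (auto intro!: prod.cong)

lemma pmf_bd_path_pmf_Suc:
  "pmf (bd_path_pmf Q \<theta> (Suc n)) x
     = pmf (bd_path_pmf Q \<theta> n) (x(Suc n := undefined)) * pmf (bd_step_pmf \<theta> (x n)) (x (Suc n))"
proof -
  define x' where "x' = x(Suc n := undefined)"
  have "pmf (bd_path_pmf Q \<theta> (Suc n)) x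
      = (\<integral>y. indicator {x'} y * pmf (bd_step_pmf \<theta> (x n)) (x (Suc n)) \<partial>bd_path_pmf Q \<theta> n)"
    unfolding bd_path_pmf.simps pmf_bind
  proof (intro integral_cong_AE AE_pmfI)
    fix y assume "y \<in> set_pmf (bd_path_pmf Q \<theta> n)"
    then have y: "y \<in> chain_paths n" by (rule set_pmf_bd_path_pmf)
    have inj: "inj (\<lambda>j. y(Suc n := j))" by (rule injI) (metis fun_upd_same)
    show "pmf (map_pmf (\<lambda>j. y(Suc n := j)) (bd_step_pmf \<theta> (y n))) x
        = indicator {x'} y * pmf (bd_step_pmf \<theta> (x n)) (x (Suc n))"
    proof (cases "y = x'")
      case True
      then have "x = y(Suc n := x (Suc n))" using y by (auto simp: x'_def)
      then show ?thesis
        using True pmf_map_inj'[OF inj, of "bd_step_pmf \<theta> (y n)" "x (Suc n)"] by (simp add: x'_def)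
    next
      case False
      have "x \<notin> (\<lambda>j. y(Suc n := j)) ` set_pmf (bd_step_pmf \<theta> (y n))"
      proof
        assume "x \<in> (\<lambda>j. y(Suc n := j)) ` set_pmf (bd_step_pmf \<theta> (y n))"
        then obtain j where "x = y(Suc n := j)" by auto
        then have "y = x'" using y unfolding x'_def by (auto simp: chain_paths_iff fun_eq_iff)
        with False show False by simp
      qed
      then show ?thesis using False by (simp add: pmf_map_outside del: pmf_map)
    qed
  qed auto
  then show ?thesis by (simp add: measure_pmf_single x'_def)
qed

lemma pmf_bd_path_pmf:
  assumes "0 \<le> \<theta>" "\<theta> \<le> 1"
  shows "pmf (bd_path_pmf Q \<theta> n) x = (if x \<in> chain_paths n then path_pmf (pmf Q) \<theta> n x else 0)"
proof (induction n arbitrary: x)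
  case 0
  have inj: "inj (\<lambda>i::nat. ((\<lambda>_. undefined)(0 := i)) :: nat \<Rightarrow> nat)"
    by (rule injI) (metis fun_upd_same)
  show ?case
  proof (cases "x \<in> chain_paths 0")
    case True
    then have "x = (\<lambda>_. undefined)(0 := x 0)" by (auto simp: chain_paths_iff)
    then show ?thesis
      using True pmf_map_inj'[OF inj, of Q "x 0"] by (simp add: path_pmf_def)
  next
    case False
    then have "x \<notin> (\<lambda>i. ((\<lambda>_. undefined)(0 := i))) ` set_pmf Q" by (auto simp: chain_paths_iff)
    then show ?thesis using False by (simp add: pmf_map_outside del: pmf_map)
  qed
next
  case (Suc n)
  have "x(Suc n := undefined) \<in> chain_paths n \<longleftrightarrow> x \<in> chain_paths (Suc n)"
    unfolding chain_paths_iff by auto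
  moreover have "path_pmf (pmf Q) \<theta> n (x(Suc n := undefined)) = path_pmf (pmf Q) \<theta> n x"
    by (rule path_pmf_cong) auto
  ultimately show ?case
    unfolding pmf_bd_path_pmf_Suc Suc.IH pmf_bd_step_pmf[OF assms] by (simp add: path_pmf_Suc)
qed

lemma expectation_bd_path_pmf_Suc:
  fixes F :: "(nat \<Rightarrow> nat) \<Rightarrow> real"
  assumes "\<And>x. \<bar>F x\<bar> \<le> B"
  shows "measure_pmf.expectation (bd_path_pmf Q \<theta> (Suc n)) F =
     measure_pmf.expectation (bd_path_pmf Q \<theta> n)
       (\<lambda>x. measure_pmf.expectation (bd_step_pmf \<theta> (x n)) (\<lambda>j. F (x(Suc n := j))))"
  by (simp add: expectation_bind_pmf[OF assms])

lemma integral_count_space_path_pmf: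
  fixes F :: "(nat \<Rightarrow> nat) \<Rightarrow> real"
  assumes "0 \<le> \<theta>" "\<theta> \<le> 1"
  shows "(\<integral>x. path_pmf (pmf Q) \<theta> n x * F x \<partial>count_space (chain_paths n))
           = measure_pmf.expectation (bd_path_pmf Q \<theta> n) F"
proof -
  have "measure_pmf.expectation (bd_path_pmf Q \<theta> n) F = (\<integral>x. pmf (bd_path_pmf Q \<theta> n) x *\<^sub>R F x \<partial>count_space UNIV)"
    by (subst measure_pmf_eq_density, subst integral_density) auto
  also have "\<dots> = (\<integral>x. indicator (chain_paths n) x *\<^sub>R (path_pmf (pmf Q) \<theta> n x * F x) \<partial>count_space UNIV)"
    by (intro Bochner_Integration.integral_cong) (auto simp: pmf_bd_path_pmf[OF assms] indicator_def)
  also have "\<dots> = (\<integral>x. path_pmf (pmf Q) \<theta> n x * F x \<partial>count_space (chain_paths n))"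
    by (subst integral_restrict_space[symmetric]) (auto simp: restrict_count_space)
  finally show ?thesis ..
qed

lemma path_pmf_nonneg: "0 \<le> \<theta> \<Longrightarrow> \<theta> \<le> 1 \<Longrightarrow> 0 \<le> path_pmf (pmf Q) \<theta> n x"
  unfolding path_pmf_def bd_trans_def by (intro mult_nonneg_nonneg prod_nonneg) auto

lemma integral_path_law:
  fixes F :: "(nat \<Rightarrow> nat) \<Rightarrow> real"
  assumes "0 \<le> \<theta>" "\<theta> \<le> 1"
  shows "(\<integral>x. F x \<partial>path_law (pmf Q) \<theta> n) = measure_pmf.expectation (bd_path_pmf Q \<theta> n) F"
  unfolding path_law_def
  by (subst integral_density) (auto simp: path_pmf_nonneg[OF assms] integral_count_space_path_pmf[OF assms])

definition step_llr :: "real \<Rightarrow> real \<Rightarrow> nat \<Rightarrow> nat \<Rightarrow> real" where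
  "step_llr \<theta>0 \<theta> i j =
     (if i = 0 then 0 else if j = Suc i then ln (\<theta>0 / \<theta>) else ln ((1 - \<theta>0) / (1 - \<theta>)))"

definition path_llr :: "real \<Rightarrow> real \<Rightarrow> nat \<Rightarrow> (nat \<Rightarrow> nat) \<Rightarrow> real" where
  "path_llr \<theta>0 \<theta> n x = (\<Sum>i\<in>{1..n}. step_llr \<theta>0 \<theta> (x (i - 1)) (x i))"

lemma abs_path_llr_le:
  "\<bar>path_llr \<theta>0 \<theta> n x\<bar> \<le> real n * (\<bar>ln (\<theta>0 / \<theta>)\<bar> + \<bar>ln ((1 - \<theta>0) / (1 - \<theta>))\<bar>)"
proof -
  have "\<bar>path_llr \<theta>0 \<theta> n x\<bar> \<le> (\<Sum>i\<in>{1..n}. \<bar>step_llr \<theta>0 \<theta> (x (i - 1)) (x i)\<bar>)"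
    unfolding path_llr_def by (rule sum_abs)
  also have "\<dots> \<le> (\<Sum>i\<in>{1..n}. \<bar>ln (\<theta>0 / \<theta>)\<bar> + \<bar>ln ((1 - \<theta>0) / (1 - \<theta>))\<bar>)"
    by (intro sum_mono) (auto simp: step_llr_def)
  finally show ?thesis by simp
qed

lemma abs_path_llr_squared_le:
  "\<bar>(path_llr \<theta>0 \<theta> n x)\<^sup>2\<bar> \<le> (real n * (\<bar>ln (\<theta>0 / \<theta>)\<bar> + \<bar>ln ((1 - \<theta>0) / (1 - \<theta>))\<bar>))\<^sup>2"
  using power_mono[OF abs_path_llr_le[of \<theta>0 \<theta> n x] abs_ge_zero, of 2] by simp

lemma path_llr_fun_upd_Suc:
  "path_llr \<theta>0 \<theta> (Suc n) (x(Suc n := j)) = path_llr \<theta>0 \<theta> n x + step_llr \<theta>0 \<theta> (x n) j"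
proof -
  have "{1..Suc n} = insert (Suc n) {1..n}" by auto
  then show ?thesis unfolding path_llr_def by (auto intro!: sum.cong)
qed

context
  fixes \<theta>0 \<theta> :: real
  assumes \<theta>0: "0 < \<theta>0" "\<theta>0 < 1" and \<theta>: "0 < \<theta>" "\<theta> < 1"
begin

lemma expectation_step_llr:
  "measure_pmf.expectation (bd_step_pmf \<theta>0 i) (\<lambda>j. r + step_llr \<theta>0 \<theta> i j)
     = r + (if i = 0 then 0 else bernoulli_kl \<theta>0 \<theta>)"
  using \<theta>0 by (cases i) (simp_all add: expectation_bd_step_pmf step_llr_def bernoulli_kl_def algebra_simps)

lemma expectation_step_llr_squared:
  "measure_pmf.expectation (bd_step_pmf \<theta>0 i) (\<lambda>j. (r + step_llr \<theta>0 \<theta> i j)\<^sup>2)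
     = r\<^sup>2 + (if i = 0 then 0 else 2 * r * bernoulli_kl \<theta>0 \<theta> + bernoulli_llr_second_moment \<theta>0 \<theta>)"
  using \<theta>0 by (cases i) (simp_all add: expectation_bd_step_pmf step_llr_def bernoulli_kl_def
                  bernoulli_llr_second_moment_def algebra_simps power2_eq_square)

lemma expectation_path_llr_le:
  "measure_pmf.expectation (bd_path_pmf Q \<theta>0 n) (path_llr \<theta>0 \<theta> n) \<le> real n * bernoulli_kl \<theta>0 \<theta>"
proof (induction n)
  case (Suc n)
  let ?E = "measure_pmf.expectation (bd_path_pmf Q \<theta>0 n)" and ?kl = "bernoulli_kl \<theta>0 \<theta>"
  have "measure_pmf.expectation (bd_path_pmf Q \<theta>0 (Suc n)) (path_llr \<theta>0 \<theta> (Suc n))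
      = ?E (\<lambda>x. path_llr \<theta>0 \<theta> n x + (if x n = 0 then 0 else ?kl))"
    by (subst expectation_bd_path_pmf_Suc[OF abs_path_llr_le])
       (simp add: path_llr_fun_upd_Suc expectation_step_llr)
  also have "\<dots> \<le> ?E (\<lambda>x. path_llr \<theta>0 \<theta> n x + ?kl)"
    using bernoulli_kl_nonneg[OF \<theta>0 \<theta>]
    by (intro integral_mono Bochner_Integration.integrable_add integrable_pmf_bounded[OF abs_path_llr_le]
          integrable_pmf_bounded[where B = "\<bar>?kl\<bar>"]) auto
  also have "\<dots> = ?E (path_llr \<theta>0 \<theta> n) + ?kl"
    by (simp add: integrable_pmf_bounded[OF abs_path_llr_le])
  finally show ?case using Suc.IH by (simp add: algebra_simps)
qed (simp add: path_llr_def)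

lemma expectation_path_llr_squared_le:
  assumes N: "0 < N"
  shows "measure_pmf.expectation (bd_path_pmf Q \<theta>0 n) (\<lambda>x. (path_llr \<theta>0 \<theta> n x)\<^sup>2)
           \<le> (1 + 1 / N) ^ n * (real n * (N * (bernoulli_kl \<theta>0 \<theta>)\<^sup>2 + bernoulli_llr_second_moment \<theta>0 \<theta>))"
proof (induction n)
  case (Suc n)
  let ?E = "measure_pmf.expectation (bd_path_pmf Q \<theta>0 n)" and ?r = "path_llr \<theta>0 \<theta> n"
  let ?kl = "bernoulli_kl \<theta>0 \<theta>" and ?c = "N * (bernoulli_kl \<theta>0 \<theta>)\<^sup>2 + bernoulli_llr_second_moment \<theta>0 \<theta>"
  have c: "0 \<le> ?c" using N bernoulli_llr_second_moment_nonneg[of \<theta>0 \<theta>] \<theta>0 by simp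
  have int: "integrable (measure_pmf (bd_path_pmf Q \<theta>0 n)) (\<lambda>x. (1 + 1 / N) * (?r x)\<^sup>2 + ?c)"
    by (rule Bochner_Integration.integrable_add[OF integrable_mult_right
          [OF integrable_pmf_bounded[OF abs_path_llr_squared_le]] measure_pmf.integrable_const])
  \<comment> \<open>the cross term is absorbed by AM-GM: \<open>2 r kl \<le> r\<^sup>2 / N + N kl\<^sup>2\<close>\<close>
  have step: "(?r x)\<^sup>2 + (if x n = 0 then 0 else 2 * ?r x * ?kl + bernoulli_llr_second_moment \<theta>0 \<theta>)
      \<le> (1 + 1 / N) * (?r x)\<^sup>2 + ?c" for x
  proof -
    have "0 \<le> (?r x / N - ?kl)\<^sup>2 * N" using N by simp
    also have "\<dots> = (?r x)\<^sup>2 / N + N * ?kl\<^sup>2 - 2 * ?r x * ?kl"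
      using N by (simp add: field_simps power2_eq_square)
    finally show ?thesis
      using N bernoulli_llr_second_moment_nonneg[of \<theta>0 \<theta>] \<theta>0
      by (simp add: distrib_right)
  qed
  have "measure_pmf.expectation (bd_path_pmf Q \<theta>0 (Suc n)) (\<lambda>x. (path_llr \<theta>0 \<theta> (Suc n) x)\<^sup>2)
      = ?E (\<lambda>x. (?r x)\<^sup>2 + (if x n = 0 then 0 else 2 * ?r x * ?kl + bernoulli_llr_second_moment \<theta>0 \<theta>))"
    by (subst expectation_bd_path_pmf_Suc[OF abs_path_llr_squared_le])
       (simp add: path_llr_fun_upd_Suc expectation_step_llr_squared)
  also have "\<dots> \<le> ?E (\<lambda>x. (1 + 1 / N) * (?r x)\<^sup>2 + ?c)"
    using int step c N by (intro integral_mono') auto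
  also have "\<dots> = (1 + 1 / N) * ?E (\<lambda>x. (?r x)\<^sup>2) + ?c"
    by (simp add: integrable_pmf_bounded[OF abs_path_llr_squared_le])
  also have "\<dots> \<le> (1 + 1 / N) * ((1 + 1 / N) ^ n * (real n * ?c)) + (1 + 1 / N) ^ Suc n * ?c"
  proof -
    have "1 \<le> (1 + 1 / N) ^ Suc n" using N by (intro one_le_power) simp
    then have "?c \<le> (1 + 1 / N) ^ Suc n * ?c" using c by (simp add: mult_le_cancel_right1)
    then show ?thesis using Suc.IH N by (intro add_mono mult_left_mono) auto
  qed
  also have "\<dots> = (1 + 1 / N) ^ Suc n * (real (Suc n) * ?c)"
    by (simp add: algebra_simps)
  finally show ?case .
qed (simp add: path_llr_def)

end

context
  fixes \<theta>0 \<theta> :: real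
  assumes \<theta>0: "0 < \<theta>0" "\<theta>0 < 1" and \<theta>: "0 < \<theta>" "\<theta> < 1"
begin

lemma bd_trans_eq_0_iff: "bd_trans \<theta> i j = 0 \<longleftrightarrow> bd_trans \<theta>0 i j = 0"
  using \<theta>0 \<theta> unfolding bd_trans_def by auto

lemma path_pmf_eq_0_iff:
  "path_pmf (pmf Q) \<theta> n x = 0 \<longleftrightarrow> path_pmf (pmf Q) \<theta>0 n x = 0"
  unfolding path_pmf_def by (simp add: bd_trans_eq_0_iff)

lemma ln_path_pmf_ratio:
  assumes "path_pmf (pmf Q) \<theta>0 n x \<noteq> 0"
  shows "ln (path_pmf (pmf Q) \<theta>0 n x / path_pmf (pmf Q) \<theta> n x) = path_llr \<theta>0 \<theta> n x"
proof -
  let ?t = "\<lambda>p i. bd_trans p (x (i - 1)) (x i)"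
  have nz: "pmf Q (x 0) \<noteq> 0" "\<And>i. i \<in> {1..n} \<Longrightarrow> ?t \<theta>0 i \<noteq> 0 \<and> ?t \<theta> i \<noteq> 0"
    using assms bd_trans_eq_0_iff unfolding path_pmf_def by auto
  have "path_pmf (pmf Q) \<theta>0 n x / path_pmf (pmf Q) \<theta> n x = (\<Prod>i\<in>{1..n}. ?t \<theta>0 i / ?t \<theta> i)"
    unfolding path_pmf_def using nz(1) by (simp add: prod_dividef)
  also have "ln \<dots> = (\<Sum>i\<in>{1..n}. ln (?t \<theta>0 i / ?t \<theta> i))"
    using nz(2) by (intro ln_prod) auto
  also have "\<dots> = path_llr \<theta>0 \<theta> n x"
    unfolding path_llr_def
  proof (intro sum.cong refl)
    fix i assume "i \<in> {1..n}"
    then show "ln (?t \<theta>0 i / ?t \<theta> i) = step_llr \<theta>0 \<theta> (x (i - 1)) (x i)"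
      using nz(2)[of i] by (auto simp: bd_trans_def step_llr_def split: if_splits)
  qed
  finally show ?thesis .
qed

lemma KL_path_law:
  "KL (path_law (pmf Q) \<theta>0 n) (path_law (pmf Q) \<theta> n)
     = measure_pmf.expectation (bd_path_pmf Q \<theta>0 n) (path_llr \<theta>0 \<theta> n)"
proof -
  interpret sigma_finite_measure "count_space (chain_paths n)"
    by (rule sigma_finite_measure_count_space_countable[OF countable_chain_paths])
  have "KL (path_law (pmf Q) \<theta>0 n) (path_law (pmf Q) \<theta> n) =
      (\<integral>x. path_pmf (pmf Q) \<theta>0 n x * log (exp 1) (path_pmf (pmf Q) \<theta>0 n x / path_pmf (pmf Q) \<theta> n x)
        \<partial>count_space (chain_paths n))"
    unfolding KL_def path_law_def using \<theta>0 \<theta>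
    by (intro KL_density_density) (auto simp: path_pmf_nonneg path_pmf_eq_0_iff)
  also have "\<dots> = (\<integral>x. path_pmf (pmf Q) \<theta>0 n x * path_llr \<theta>0 \<theta> n x \<partial>count_space (chain_paths n))"
  proof (intro Bochner_Integration.integral_cong refl)
    fix x
    show "path_pmf (pmf Q) \<theta>0 n x * log (exp 1) (path_pmf (pmf Q) \<theta>0 n x / path_pmf (pmf Q) \<theta> n x)
        = path_pmf (pmf Q) \<theta>0 n x * path_llr \<theta>0 \<theta> n x"
      by (cases "path_pmf (pmf Q) \<theta>0 n x = 0") (simp_all add: log_def ln_path_pmf_ratio)
  qed
  also have "\<dots> = measure_pmf.expectation (bd_path_pmf Q \<theta>0 n) (path_llr \<theta>0 \<theta> n)"
    using \<theta>0 by (intro integral_count_space_path_pmf) auto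
  finally show ?thesis .
qed

lemma var_path_law_le:
  "var_under (path_law (pmf Q) \<theta>0 n) (log_lik_ratio (pmf Q) n \<theta> \<theta>0)
     \<le> measure_pmf.expectation (bd_path_pmf Q \<theta>0 n) (\<lambda>x. (path_llr \<theta>0 \<theta> n x)\<^sup>2)"
proof -
  let ?M = "measure_pmf (bd_path_pmf Q \<theta>0 n)"
  have ae: "AE x in ?M. log_lik_ratio (pmf Q) n \<theta> \<theta>0 x = path_llr \<theta>0 \<theta> n x"
  proof (rule AE_pmfI)
    fix x assume "x \<in> set_pmf (bd_path_pmf Q \<theta>0 n)"
    then have "path_pmf (pmf Q) \<theta>0 n x \<noteq> 0"
      using \<theta>0 pmf_bd_path_pmf[of \<theta>0 Q n x] by (auto simp: set_pmf_eq split: if_splits)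
    then show "log_lik_ratio (pmf Q) n \<theta> \<theta>0 x = path_llr \<theta>0 \<theta> n x"
      unfolding log_lik_ratio_def using ln_path_pmf_ratio by simp
  qed
  have "measure_pmf.expectation (bd_path_pmf Q \<theta>0 n) (log_lik_ratio (pmf Q) n \<theta> \<theta>0)
      = measure_pmf.expectation (bd_path_pmf Q \<theta>0 n) (path_llr \<theta>0 \<theta> n)"
    by (rule integral_cong_AE) (use ae in auto)
  then have "var_under (path_law (pmf Q) \<theta>0 n) (log_lik_ratio (pmf Q) n \<theta> \<theta>0)
      = measure_pmf.variance (bd_path_pmf Q \<theta>0 n) (path_llr \<theta>0 \<theta> n)"
    unfolding var_under_def using \<theta>0 ae
    by (simp add: integral_path_law) (rule integral_cong_AE; auto)
  also have "\<dots> = measure_pmf.expectation (bd_path_pmf Q \<theta>0 n) (\<lambda>x. (path_llr \<theta>0 \<theta> n x)\<^sup>2)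
                   - (measure_pmf.expectation (bd_path_pmf Q \<theta>0 n) (path_llr \<theta>0 \<theta> n))\<^sup>2"
    by (intro measure_pmf.variance_eq integrable_pmf_bounded[OF abs_path_llr_le]
          integrable_pmf_bounded[OF abs_path_llr_squared_le])
  finally show ?thesis by simp
qed

end

context
  fixes \<theta>0 \<theta> :: real
  assumes \<theta>0: "0 < \<theta>0" "\<theta>0 < 1/2" and \<theta>: "0 < \<theta>" "\<theta> < 1/2"
begin

lemma KL_path_law_le:
  "KL (path_law (pmf Q) \<theta>0 n) (path_law (pmf Q) \<theta> n) \<le> real n * ((2 * \<theta> - 2 * \<theta>0)\<^sup>2 / (2 * \<theta>))"
proof -
  have "KL (path_law (pmf Q) \<theta>0 n) (path_law (pmf Q) \<theta> n) \<le> real n * bernoulli_kl \<theta>0 \<theta>"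
    using \<theta>0 \<theta> by (simp add: KL_path_law expectation_path_llr_le)
  also have "\<dots> \<le> real n * ((2 * \<theta> - 2 * \<theta>0)\<^sup>2 / (2 * \<theta>))"
    using bernoulli_kl_le[OF \<theta>0 \<theta>] by (intro mult_left_mono) auto
  finally show ?thesis .
qed

lemma var_path_law_le_chi_square:
  assumes n: "0 < n"
  shows "var_under (path_law (pmf Q) \<theta>0 n) (log_lik_ratio (pmf Q) n \<theta> \<theta>0)
           \<le> 3 * (real n * (real n * ((2 * \<theta> - 2 * \<theta>0) ^ 4 / (2 * \<theta>)\<^sup>2) + (2 * \<theta> - 2 * \<theta>0)\<^sup>2 / (2 * \<theta>)))"
proof -
  let ?kl = "bernoulli_kl \<theta>0 \<theta>" and ?w = "bernoulli_llr_second_moment \<theta>0 \<theta>"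
  have kl: "?kl\<^sup>2 \<le> (2 * \<theta> - 2 * \<theta>0) ^ 4 / (2 * \<theta>)\<^sup>2"
    using power_mono[OF bernoulli_kl_le[OF \<theta>0 \<theta>] bernoulli_kl_nonneg[of \<theta>0 \<theta>], of 2] \<theta>0 \<theta>
    by (simp add: power_divide flip: power_mult)
  have "var_under (path_law (pmf Q) \<theta>0 n) (log_lik_ratio (pmf Q) n \<theta> \<theta>0)
      \<le> measure_pmf.expectation (bd_path_pmf Q \<theta>0 n) (\<lambda>x. (path_llr \<theta>0 \<theta> n x)\<^sup>2)"
    using \<theta>0 \<theta> by (intro var_path_law_le) auto
  also have "\<dots> \<le> (1 + 1 / real n) ^ n * (real n * (real n * ?kl\<^sup>2 + ?w))"
    using \<theta>0 \<theta> n by (intro expectation_path_llr_squared_le) auto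
  also have "\<dots> \<le> 3 * (real n * (real n * ?kl\<^sup>2 + ?w))"
    using one_plus_inverse_power_le_exp1[of n] exp_le bernoulli_llr_second_moment_nonneg[of \<theta>0 \<theta>] \<theta>0
    by (intro mult_right_mono) auto
  also have "\<dots> \<le> 3 * (real n * (real n * ((2 * \<theta> - 2 * \<theta>0) ^ 4 / (2 * \<theta>)\<^sup>2) + (2 * \<theta> - 2 * \<theta>0)\<^sup>2 / (2 * \<theta>)))"
    using kl bernoulli_llr_second_moment_le[OF \<theta>0 \<theta>] by (intro mult_left_mono add_mono) auto
  finally show ?thesis .
qed

end

section \<open>The three conditions\<close>

context
  fixes \<theta>0 :: real and n :: nat
  assumes \<theta>0: "0 < \<theta>0" "\<theta>0 < 1/2" and big: "4 \<le> 2 * \<theta>0 * real n"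
begin

lemma nn_integral_KL_path_law_le:
  "(\<integral>\<^sup>+ \<theta>. ennreal (KL (path_law (pmf Q) \<theta>0 n) (path_law (pmf Q) \<theta> n))
       \<partial>rbeta (2 * \<theta>0 * real n) ((1 - 2 * \<theta>0) * real n)) \<le> 2"
proof -
  define m where "m = 2 * \<theta>0"
  have m: "0 < m" "m < 1" using \<theta>0 by (auto simp: m_def)
  have n: "0 < n" using big by (intro gr0I) simp
  have "(\<integral>\<^sup>+ \<theta>. ennreal (KL (path_law (pmf Q) \<theta>0 n) (path_law (pmf Q) \<theta> n)) \<partial>rbeta (m * real n) ((1 - m) * real n))
      \<le> ennreal (real n * (m * (1 - m) / (m * real n - 1)))"
  proof (rule nn_integral_rbeta_le)
    show "has_bochner_integral lborel
        (\<lambda>y. beta_density (m * real n) ((1 - m) * real n) y * (real n * ((y - m)\<^sup>2 / y)))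
        (real n * (m * (1 - m) / (m * real n - 1)))"
      using has_bochner_integral_mult_right[OF has_bochner_integral_beta_chi_square[of m "real n"], of "real n"] m big
      by (simp add: m_def ac_simps)
    show "KL (path_law (pmf Q) \<theta>0 n) (path_law (pmf Q) \<theta> n) \<le> real n * ((2 * \<theta> - m)\<^sup>2 / (2 * \<theta>))"
      if "0 < \<theta>" "\<theta> < 1/2" for \<theta>
      using KL_path_law_le[OF \<theta>0 that] by (simp add: m_def)
  qed (use m n in auto)
  also have "\<dots> \<le> 2"
    using beta_chi_square_le[of m "real n"] m n big unfolding ennreal_numeral[symmetric]
    by (intro ennreal_leI) (auto simp: m_def field_simps)
  finally show ?thesis unfolding m_def .
qed

lemma nn_integral_var_path_law_le:
  "(\<integral>\<^sup>+ \<theta>. ennreal (var_under (path_law (pmf Q) \<theta>0 n) (log_lik_ratio (pmf Q) n \<theta> \<theta>0))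
       \<partial>rbeta (2 * \<theta>0 * real n) ((1 - 2 * \<theta>0) * real n))
     \<le> ennreal (132 / (2 * \<theta>0)\<^sup>2 + 6)"
proof -
  define m where "m = 2 * \<theta>0"
  have m: "0 < m" "m < 1" using \<theta>0 by (auto simp: m_def)
  have n: "0 < n" using big by (intro gr0I) simp
  define V4 where "V4 = (2 * m * (1 + 2 * m - 4 * m\<^sup>2 + m ^ 3) + 3 * real n * m\<^sup>2 * (1 - m)\<^sup>2)
              / ((real n + 1) * (m * real n - 1) * (m * real n - 2))"
  define V2 where "V2 = m * (1 - m) / (m * real n - 1)"
  have "(\<integral>\<^sup>+ \<theta>. ennreal (var_under (path_law (pmf Q) \<theta>0 n) (log_lik_ratio (pmf Q) n \<theta> \<theta>0))
          \<partial>rbeta (m * real n) ((1 - m) * real n))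
      \<le> ennreal (3 * (real n * (real n * V4 + V2)))"
  proof (rule nn_integral_rbeta_le)
    let ?f = "beta_density (m * real n) ((1 - m) * real n)"
    have "has_bochner_integral lborel
        (\<lambda>y. 3 * (real n * (real n * (?f y * ((y - m) ^ 4 / y\<^sup>2)) + ?f y * ((y - m)\<^sup>2 / y))))
        (3 * (real n * (real n * V4 + V2)))"
      using m big unfolding V4_def V2_def m_def[symmetric]
      by (intro has_bochner_integral_mult_right has_bochner_integral_add
            has_bochner_integral_beta_chi_square_squared has_bochner_integral_beta_chi_square) auto
    then show "has_bochner_integral lborel
        (\<lambda>y. ?f y * (3 * (real n * (real n * ((y - m) ^ 4 / y\<^sup>2) + (y - m)\<^sup>2 / y))))
        (3 * (real n * (real n * V4 + V2)))"
      by (simp add: algebra_simps)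
    show "var_under (path_law (pmf Q) \<theta>0 n) (log_lik_ratio (pmf Q) n \<theta> \<theta>0)
        \<le> 3 * (real n * (real n * ((2 * \<theta> - m) ^ 4 / (2 * \<theta>)\<^sup>2) + (2 * \<theta> - m)\<^sup>2 / (2 * \<theta>)))"
      if "0 < \<theta>" "\<theta> < 1/2" for \<theta>
      using var_path_law_le_chi_square[OF \<theta>0 that n] by (simp add: m_def)
  qed (use m n in auto)
  also have "\<dots> \<le> ennreal (3 * (real n * (real n * (44 / (m\<^sup>2 * (real n)\<^sup>2)) + 2 / real n)))"
    using beta_chi_square_squared_le[of m "real n"] beta_chi_square_le[of m "real n"] m n big
    unfolding V4_def V2_def m_def[symmetric]
    by (intro ennreal_leI mult_left_mono add_mono) auto
  also have "\<dots> = ennreal (132 / m\<^sup>2 + 6)"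
    using n m by (simp add: field_simps power2_eq_square)
  finally show ?thesis unfolding m_def .
qed

end

lemma ex_pmf_eq:
  fixes q0 :: "nat \<Rightarrow> real"
  assumes "\<forall>i. 0 \<le> q0 i" "(q0 has_sum 1) UNIV"
  shows "\<exists>Q. pmf Q = q0"
proof -
  have s: "q0 sums 1" by (rule has_sum_imp_sums[OF assms(2)])
  have "(\<integral>\<^sup>+x. ennreal (q0 x) \<partial>count_space UNIV) = ennreal (\<Sum>i. q0 i)"
    using assms(1) s by (simp add: nn_integral_count_space_nat suminf_ennreal2 sums_summable)
  then have "(\<integral>\<^sup>+x. ennreal (q0 x) \<partial>count_space UNIV) = 1" using s by (simp add: sums_iff)
  then show ?thesis using assms(1) pmf_embed_pmf[of q0] by (intro exI[of _ "embed_pmf q0"]) auto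
qed

lemma eventually_le_mult_real_sequentially:
  assumes "0 < m"
  shows "eventually (\<lambda>n. c \<le> m * real n) sequentially"
proof -
  have "eventually (\<lambda>n. c / m \<le> real n) sequentially"
    using filterlim_real_sequentially by (simp add: filterlim_at_top)
  then show ?thesis by eventually_elim (use assms in \<open>simp add: field_simps\<close>)
qed

lemma conditions_le_sqrt:
  fixes \<theta>0 a b :: real and n :: nat
  assumes \<theta>0: "0 < \<theta>0" "\<theta>0 < 1/2" and ab: "0 < a" "0 < b"
    and big: "a + 4 \<le> 2 * \<theta>0 * real n" "b + 3 \<le> (1 - 2 * \<theta>0) * real n"
  defines "C \<equiv> 132 / (2 * \<theta>0)\<^sup>2 + 15 + \<bar>ln (Beta a b)\<bar> + a * \<bar>ln (2 * \<theta>0)\<bar> + b * \<bar>ln (1 - 2 * \<theta>0)\<bar>"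
  shows "(\<integral>\<^sup>+ \<theta>. ennreal (KL (path_law (pmf Q) \<theta>0 n) (path_law (pmf Q) \<theta> n))
            \<partial>rbeta (2 * \<theta>0 * real n) ((1 - 2 * \<theta>0) * real n)) \<le> ennreal (C * sqrt (real n))"
    and "(\<integral>\<^sup>+ \<theta>. ennreal (var_under (path_law (pmf Q) \<theta>0 n) (log_lik_ratio (pmf Q) n \<theta> \<theta>0))
            \<partial>rbeta (2 * \<theta>0 * real n) ((1 - 2 * \<theta>0) * real n)) \<le> ennreal (C * sqrt (real n))"
    and "KL (rbeta (2 * \<theta>0 * real n) ((1 - 2 * \<theta>0) * real n)) (rbeta a b) \<le> C * sqrt (real n)"
proof -
  define K where "K = 132 / (2 * \<theta>0)\<^sup>2 + 6"
  define K' where "K' = \<bar>ln (Beta a b)\<bar> + a * \<bar>ln (2 * \<theta>0)\<bar> + b * \<bar>ln (1 - 2 * \<theta>0)\<bar> + 1"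
  have K: "2 \<le> K" and K': "0 \<le> K'" unfolding K_def K'_def using ab by auto
  have "n \<noteq> 0" using big ab by (intro notI) simp
  then have sqrt_n: "1 \<le> sqrt (real n)" by simp
  have "K \<le> K * sqrt (real n)" "K' \<le> K' * sqrt (real n)" "0 \<le> K' * sqrt (real n)"
    using K K' sqrt_n by (simp_all add: mult_le_cancel_left1)
  moreover have "C * sqrt (real n) = K * sqrt (real n) + K' * sqrt (real n) + 8 * sqrt (real n)"
    unfolding C_def K_def K'_def by (simp add: algebra_simps)
  ultimately have le_C: "K \<le> C * sqrt (real n)" "K' + 8 * sqrt (real n) \<le> C * sqrt (real n)"
    using K sqrt_n by linarith+
  have "(2 :: ennreal) \<le> ennreal (C * sqrt (real n))" "ennreal K \<le> ennreal (C * sqrt (real n))"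
    using K le_C by (simp_all add: ennreal_leI flip: ennreal_numeral)
  then show "(\<integral>\<^sup>+ \<theta>. ennreal (KL (path_law (pmf Q) \<theta>0 n) (path_law (pmf Q) \<theta> n))
            \<partial>rbeta (2 * \<theta>0 * real n) ((1 - 2 * \<theta>0) * real n)) \<le> ennreal (C * sqrt (real n))"
    and "(\<integral>\<^sup>+ \<theta>. ennreal (var_under (path_law (pmf Q) \<theta>0 n) (log_lik_ratio (pmf Q) n \<theta> \<theta>0))
            \<partial>rbeta (2 * \<theta>0 * real n) ((1 - 2 * \<theta>0) * real n)) \<le> ennreal (C * sqrt (real n))"
    using nn_integral_KL_path_law_le[OF \<theta>0, of n Q] nn_integral_var_path_law_le[OF \<theta>0, of n Q] big ab
    unfolding K_def by (auto intro: order_trans)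
  show "KL (rbeta (2 * \<theta>0 * real n) ((1 - 2 * \<theta>0) * real n)) (rbeta a b) \<le> C * sqrt (real n)"
    by (rule order_trans[OF KL_rbeta_le_sqrt[OF ab] le_C(2)[unfolded K'_def]]) (use \<theta>0 big ab in auto)
qed

theorem mainTheorem12:
  fixes q0 :: "nat \<Rightarrow> real" and \<theta>0 a b :: real
  assumes "0 < \<theta>0" and "\<theta>0 < 1/2" and "0 < a" and "0 < b"
    and "\<forall>i. 0 \<le> q0 i" and "(q0 has_sum 1) UNIV"
    and "summable (\<lambda>i. (real i)\<^sup>2 * q0 i)"
  shows "\<exists>C > 0. \<exists>n0::nat. \<forall>n \<ge> n0.
     (let \<epsilon> = C / sqrt (real n); \<rho> = rbeta (2 * real n * \<theta>0) (real n * (1 - 2 * \<theta>0)) in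
       (\<integral>\<^sup>+ \<theta>. ennreal (KL (path_law q0 \<theta>0 n) (path_law q0 \<theta> n)) \<partial>\<rho>) \<le> ennreal (real n * \<epsilon>)
     \<and> (\<integral>\<^sup>+ \<theta>. ennreal (var_under (path_law q0 \<theta>0 n) (log_lik_ratio q0 n \<theta> \<theta>0)) \<partial>\<rho>)
           \<le> ennreal (real n * \<epsilon>)
     \<and> KL \<rho> (rbeta a b) \<le> real n * \<epsilon>)"
proof -
  obtain Q where Q: "pmf Q = q0" using ex_pmf_eq[OF assms(5,6)] by blast
  define C where "C = 132 / (2 * \<theta>0)\<^sup>2 + 15 + \<bar>ln (Beta a b)\<bar> + a * \<bar>ln (2 * \<theta>0)\<bar> + b * \<bar>ln (1 - 2 * \<theta>0)\<bar>"
  obtain n0 where n0: "\<And>n. n0 \<le> n \<Longrightarrow> a + 4 \<le> 2 * \<theta>0 * real n \<and> b + 3 \<le> (1 - 2 * \<theta>0) * real n"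
    using eventually_conj[OF eventually_le_mult_real_sequentially[of "2 * \<theta>0" "a + 4"]
        eventually_le_mult_real_sequentially[of "1 - 2 * \<theta>0" "b + 3"]] assms(1,2)
    unfolding eventually_sequentially by auto
  show ?thesis
  proof (intro exI[of _ C] exI[of _ n0] conjI allI impI)
    show "0 < C" unfolding C_def using assms(1,3,4) by (intro add_pos_nonneg) auto
    fix n assume "n0 \<le> n"
    have "real n * (C / sqrt (real n)) = C * sqrt (real n)"
      by (cases "n = 0") (auto simp: field_simps real_div_sqrt)
    moreover have "rbeta (2 * real n * \<theta>0) (real n * (1 - 2 * \<theta>0)) = rbeta (2 * \<theta>0 * real n) ((1 - 2 * \<theta>0) * real n)"
      by (simp add: ac_simps)
    ultimately show "let \<epsilon> = C / sqrt (real n); \<rho> = rbeta (2 * real n * \<theta>0) (real n * (1 - 2 * \<theta>0)) in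
       (\<integral>\<^sup>+ \<theta>. ennreal (KL (path_law q0 \<theta>0 n) (path_law q0 \<theta> n)) \<partial>\<rho>) \<le> ennreal (real n * \<epsilon>)
     \<and> (\<integral>\<^sup>+ \<theta>. ennreal (var_under (path_law q0 \<theta>0 n) (log_lik_ratio q0 n \<theta> \<theta>0)) \<partial>\<rho>)
           \<le> ennreal (real n * \<epsilon>)
     \<and> KL \<rho> (rbeta a b) \<le> real n * \<epsilon>"
      using conditions_le_sqrt(1,2)[where Q = Q] conditions_le_sqrt(3) assms(1-4) n0[OF \<open>n0 \<le> n\<close>]
      unfolding Let_def Q C_def by simp
  qed
qed

end
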